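(* Let $(\mathcal A,\varphi,\mathcal F,\Phi)$ be a ncps of type B$'$ with associated algebra $\mathcal B=\mathcal A\oplus\mathcal F$. Let $b_j=a_j+f_j\in\mathcal B$ ($a_j\in\mathcal A$, $f_j\in\mathcal F$, $j=1,2$) and $P\in\mathcal F$ with $\Phi(P)\ne0$. Assume that $a_1,a_2$ are free with respect to $\varphi$, that the pair $(\langle a_1,a_2\rangle,\langle P,f_1,f_2\rangle)$ is cyclic-antimonotone independent, and that $f_1,f_2$ are Boolean independent with respect to $\varphi_P$. Let $\mu_j$ be the distribution of $a_j$ w.r.t. $\varphi$ and $\nu_j$ the distribution of $f_j$ w.r.t. $\varphi_P$. Then $b_1+b_2$ has distribution $\mu_1\boxplus\mu_2$ w.r.t. $\varphi$, and w.r.t. $\varphi_P$ it has the distribution equal to the conditionally free convolution of $(\mu_1,\mu_1\lhd\nu_1)$ and $(\mu_2,\mu_2\lhd\nu_2)$.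
   Context: Ncps of type B$'$ $(\mathcal A,\varphi,\mathcal F,\Phi)$: $\mathcal A$ unital complex algebra, $\varphi(1_{\mathcal A})=1$, $\mathcal F$ an algebra which is an $\mathcal A$-bimodule compatible with its multiplication, $\Phi:\mathcal F\to\mathbb C$ linear. $\mathcal B=\mathcal A\oplus\mathcal F$ with product $(a_1,f_1)(a_2,f_2)=(a_1a_2,a_1f_2+f_1a_2+f_1f_2)$, unit $1_{\mathcal A}$; $\varphi(a+f):=\varphi(a)$. $\varphi_P(b):=\Phi(Pb)/\Phi(P)$ for $b\in\mathcal B$. $\langle a_1,a_2\rangle$ is the unital subalgebra of $\mathcal A$ generated by $a_1,a_2$, and $\langle P,f_1,f_2\rangle$ the subalgebra of $\mathcal F$ generated by $P,f_1,f_2$. Cyclic-antimonotone independence of $(\mathcal A_0,\mathcal F_0)$: $\Phi(c_0g_1c_1\cdots c_{n-1}g_nc_n)=\varphi(c_0c_n)\prod_{l=1}^{n-1}\varphi(c_l)\Phi(g_1\cdots g_n)$ for $n\ge1$, $c_l\in\mathcal A_0$, $g_l\in\mathcal F_0$. Elements are free/Boolean independent if the (unital, resp. non-unital) subalgebras they generate are; Boolean independence w.r.t. $\psi$: $\psi(c_1\cdots c_n)=\psi(c_1)\cdots\psi(c_n)$ for alternating indices. The distribution of $b$ w.r.t. $\omega$ is $x^n\mapsto\omega(b^n)$ on $\mathbb C[x]$. $\mu_1\boxplus\mu_2$ is the free convolution. $\mu\lhd\nu$ (antimonotone convolution) is the distribution of $y_1+y_2$ where $y_1,y_2$ have distributions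 $\mu,\nu$ and the pair of (not necessarily unital) algebras generated by $y_2$ and $y_1$ is monotonically independent, i.e. $\omega(z_0x_1z_1\cdots x_nz_n)=\omega(x_1\cdots x_n)\omega(z_0)\cdots\omega(z_n)$ for $x_l$ in the algebra of $y_2$ and $z_l$ in the unital algebra of $y_1$. The conditionally free convolution of $(\mu_1,\lambda_1)$ and $(\mu_2,\lambda_2)$ is the distribution w.r.t. $\psi$ of $c_1+c_2$, where $c_1,c_2$ generate unital subalgebras that are conditionally free w.r.t. $(\omega,\psi)$ (free w.r.t. $\omega$, and $\psi(d_1\cdots d_n)=\psi(d_1)\cdots\psi(d_n)$ for alternating $\omega$-centered $d_l$), with $c_i$ having distribution $\mu_i$ w.r.t. $\omega$ and $\lambda_i$ w.r.t. $\psi$. *)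

theory Defs
  imports Complex_Main
begin

class cscale =
  fixes cscale :: "complex \<Rightarrow> 'a \<Rightarrow> 'a"

class cvec = cscale + ab_group_add +
  assumes cscale_add_right: "cscale c (x + y) = cscale c x + cscale c y"
    and cscale_add_left: "cscale (c + d) x = cscale c x + cscale d x"
    and cscale_cscale: "cscale c (cscale d x) = cscale (c * d) x"
    and cscale_one: "cscale 1 x = x"

text \<open>Complex algebra, not necessarily unital (HOL's class ring has no unit).\<close>
class calg = cvec + ring +
  assumes mult_cscale_left: "cscale c x * y = cscale c (x * y)"
    and mult_cscale_right: "x * cscale c y = cscale c (x * y)"

class calg_1 = calg + ring_1

definition clinear :: "('a::cvec \<Rightarrow> complex) \<Rightarrow> bool" where
  "clinear f \<longleftrightarrow> (\<forall>x y. f (x + y) = f x + f y) \<and> (\<forall>c x. f (cscale c x) = c * f x)"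

definition cstate :: "('a::calg_1 \<Rightarrow> complex) \<Rightarrow> bool" where
  "cstate \<omega> \<longleftrightarrow> clinear \<omega> \<and> \<omega> 1 = 1"

inductive_set alg_gen :: "'a::calg set \<Rightarrow> 'a set" for S where
  zero: "0 \<in> alg_gen S"
| base: "s \<in> S \<Longrightarrow> s \<in> alg_gen S"
| add: "x \<in> alg_gen S \<Longrightarrow> y \<in> alg_gen S \<Longrightarrow> x + y \<in> alg_gen S"
| scale: "x \<in> alg_gen S \<Longrightarrow> cscale c x \<in> alg_gen S"
| mult: "x \<in> alg_gen S \<Longrightarrow> y \<in> alg_gen S \<Longrightarrow> x * y \<in> alg_gen S"

inductive_set ualg_gen :: "'a::calg_1 set \<Rightarrow> 'a set" for S where
  one: "1 \<in> ualg_gen S"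
| base: "s \<in> S \<Longrightarrow> s \<in> ualg_gen S"
| add: "x \<in> ualg_gen S \<Longrightarrow> y \<in> ualg_gen S \<Longrightarrow> x + y \<in> ualg_gen S"
| scale: "x \<in> ualg_gen S \<Longrightarrow> cscale c x \<in> ualg_gen S"
| mult: "x \<in> ualg_gen S \<Longrightarrow> y \<in> ualg_gen S \<Longrightarrow> x * y \<in> ualg_gen S"

text \<open>Product of a nonempty list in a possibly non-unital algebra.\<close>
fun lprod :: "'a::ring list \<Rightarrow> 'a" where
  "lprod [] = 0"
| "lprod [x] = x"
| "lprod (x # y # xs) = x * lprod (y # xs)"

text \<open>Distribution of y w.r.t. omega, as its moment sequence n \<mapsto> omega(y^n)
  (i.e. the functional x^n \<mapsto> omega(y^n) on C[x]).\<close>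
definition distr :: "('a::calg_1 \<Rightarrow> complex) \<Rightarrow> 'a \<Rightarrow> nat \<Rightarrow> complex" where
  "distr \<omega> y = (\<lambda>n. \<omega> (y ^ n))"

definition alternating :: "bool list \<Rightarrow> bool" where
  "alternating idx \<longleftrightarrow> (\<forall>k. Suc k < length idx \<longrightarrow> idx ! k \<noteq> idx ! Suc k)"

definition free2 :: "('a::calg_1 \<Rightarrow> complex) \<Rightarrow> 'a set \<Rightarrow> 'a set \<Rightarrow> bool" where
  "free2 \<omega> X Y \<longleftrightarrow>
     (\<forall>idx xs. xs \<noteq> [] \<and> length idx = length xs \<and> alternating idx \<and>
        (\<forall>k<length xs. xs ! k \<in> (if idx ! k then X else Y) \<and> \<omega> (xs ! k) = 0)
        \<longrightarrow> \<omega> (prod_list xs) = 0)"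

definition cfree2 :: "('a::calg_1 \<Rightarrow> complex) \<Rightarrow> ('a \<Rightarrow> complex) \<Rightarrow> 'a set \<Rightarrow> 'a set \<Rightarrow> bool" where
  "cfree2 \<omega> \<psi> X Y \<longleftrightarrow> free2 \<omega> X Y \<and>
     (\<forall>idx xs. xs \<noteq> [] \<and> length idx = length xs \<and> alternating idx \<and>
        (\<forall>k<length xs. xs ! k \<in> (if idx ! k then X else Y) \<and> \<omega> (xs ! k) = 0)
        \<longrightarrow> \<psi> (prod_list xs) = prod_list (map \<psi> xs))"

definition mono_indep :: "('a::calg_1 \<Rightarrow> complex) \<Rightarrow> 'a set \<Rightarrow> 'a set \<Rightarrow> bool" where
  "mono_indep \<omega> X Z \<longleftrightarrow>
     (\<forall>z0 xzs. xzs \<noteq> [] \<and> z0 \<in> Z \<and> (\<forall>(x, z) \<in> set xzs. x \<in> X \<and> z \<in> Z) \<longrightarrow>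
        \<omega> (z0 * prod_list (map (\<lambda>(x, z). x * z) xzs))
          = \<omega> (prod_list (map fst xzs)) * \<omega> z0 * prod_list (map (\<lambda>(x, z). \<omega> z) xzs))"

text \<open>mu is the free convolution of mu1, mu2 as seen from realisations in type 'c:
  for every ncps on 'c and free y1, y2 with distributions mu1, mu2, the
  distribution of y1 + y2 is mu.\<close>
definition free_conv_is :: "'c::calg_1 itself \<Rightarrow> (nat \<Rightarrow> complex) \<Rightarrow> (nat \<Rightarrow> complex) \<Rightarrow> (nat \<Rightarrow> complex) \<Rightarrow> bool" where
  "free_conv_is _ \<mu>1 \<mu>2 \<mu> \<longleftrightarrow>
     (\<forall>(\<omega>::'c \<Rightarrow> complex) y1 y2. cstate \<omega> \<and> free2 \<omega> (ualg_gen {y1}) (ualg_gen {y2}) \<and>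
        distr \<omega> y1 = \<mu>1 \<and> distr \<omega> y2 = \<mu>2 \<longrightarrow> distr \<omega> (y1 + y2) = \<mu>)"

text \<open>lam = mu \<lhd> nu, witnessed by a realisation in type 'e: y1, y2 with distributions
  mu, nu such that (alg(y2), unital alg(y1)) is monotonically independent and y1 + y2
  has distribution lam.\<close>
definition antimono_conv_in :: "'e::calg_1 itself \<Rightarrow> (nat \<Rightarrow> complex) \<Rightarrow> (nat \<Rightarrow> complex) \<Rightarrow> (nat \<Rightarrow> complex) \<Rightarrow> bool" where
  "antimono_conv_in _ \<mu> \<nu> lam \<longleftrightarrow>
     (\<exists>(\<omega>::'e \<Rightarrow> complex) y1 y2. cstate \<omega> \<and> mono_indep \<omega> (alg_gen {y2}) (ualg_gen {y1}) \<and>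
        distr \<omega> y1 = \<mu> \<and> distr \<omega> y2 = \<nu> \<and> distr \<omega> (y1 + y2) = lam)"

text \<open>lam is the conditionally free convolution of (mu1, mu1 \<lhd> nu1) and (mu2, mu2 \<lhd> nu2),
  as seen from realisations in type 'd (with the antimonotone convolutions
  realised in type 'e).\<close>
definition cfree_antimono_conv_is :: "'d::calg_1 itself \<Rightarrow> 'e::calg_1 itself \<Rightarrow>
    (nat \<Rightarrow> complex) \<Rightarrow> (nat \<Rightarrow> complex) \<Rightarrow> (nat \<Rightarrow> complex) \<Rightarrow> (nat \<Rightarrow> complex) \<Rightarrow> (nat \<Rightarrow> complex) \<Rightarrow> bool" where
  "cfree_antimono_conv_is _ te \<mu>1 \<nu>1 \<mu>2 \<nu>2 lam \<longleftrightarrow>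
     (\<forall>(\<omega>::'d \<Rightarrow> complex) \<psi> c1 c2. cstate \<omega> \<and> cstate \<psi> \<and>
        cfree2 \<omega> \<psi> (ualg_gen {c1}) (ualg_gen {c2}) \<and>
        distr \<omega> c1 = \<mu>1 \<and> distr \<omega> c2 = \<mu>2 \<and>
        antimono_conv_in te \<mu>1 \<nu>1 (distr \<psi> c1) \<and> antimono_conv_in te \<mu>2 \<nu>2 (distr \<psi> c2)
        \<longrightarrow> distr \<psi> (c1 + c2) = lam)"

text \<open>F is an algebra and an A-bimodule (left action lm, right action rm), compatible
  with its multiplication.\<close>
definition bimod_alg :: "('a::calg_1 \<Rightarrow> 'f::calg \<Rightarrow> 'f) \<Rightarrow> ('f \<Rightarrow> 'a \<Rightarrow> 'f) \<Rightarrow> bool" where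
  "bimod_alg lm rm \<longleftrightarrow>
     (\<forall>a b f. lm (a + b) f = lm a f + lm b f) \<and> (\<forall>a f g. lm a (f + g) = lm a f + lm a g) \<and>
     (\<forall>c a f. lm (cscale c a) f = cscale c (lm a f)) \<and> (\<forall>c a f. lm a (cscale c f) = cscale c (lm a f)) \<and>
     (\<forall>f a b. rm f (a + b) = rm f a + rm f b) \<and> (\<forall>f g a. rm (f + g) a = rm f a + rm g a) \<and>
     (\<forall>c a f. rm f (cscale c a) = cscale c (rm f a)) \<and> (\<forall>c a f. rm (cscale c f) a = cscale c (rm f a)) \<and>
     (\<forall>a b f. lm (a * b) f = lm a (lm b f)) \<and> (\<forall>f a b. rm f (a * b) = rm (rm f a) b) \<and>
     (\<forall>a f b. rm (lm a f) b = lm a (rm f b)) \<and> (\<forall>f. lm 1 f = f) \<and> (\<forall>f. rm f 1 = f) \<and>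
     (\<forall>a f g. lm a (f * g) = lm a f * g) \<and> (\<forall>f g a. rm (f * g) a = f * rm g a) \<and>
     (\<forall>f a g. rm f a * g = f * lm a g)"

definition ncps_B' :: "('a::calg_1 \<Rightarrow> complex) \<Rightarrow> ('f::calg \<Rightarrow> complex) \<Rightarrow> ('a \<Rightarrow> 'f \<Rightarrow> 'f) \<Rightarrow> ('f \<Rightarrow> 'a \<Rightarrow> 'f) \<Rightarrow> bool" where
  "ncps_B' \<phi> \<Phi> lm rm \<longleftrightarrow> cstate \<phi> \<and> clinear \<Phi> \<and> bimod_alg lm rm"

definition badd :: "'a::calg_1 \<times> 'f::calg \<Rightarrow> 'a \<times> 'f \<Rightarrow> 'a \<times> 'f" where
  "badd x y = (fst x + fst y, snd x + snd y)"

definition bscale :: "complex \<Rightarrow> 'a::calg_1 \<times> 'f::calg \<Rightarrow> 'a \<times> 'f" where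
  "bscale c x = (cscale c (fst x), cscale c (snd x))"

definition bmul :: "('a::calg_1 \<Rightarrow> 'f::calg \<Rightarrow> 'f) \<Rightarrow> ('f \<Rightarrow> 'a \<Rightarrow> 'f) \<Rightarrow> 'a \<times> 'f \<Rightarrow> 'a \<times> 'f \<Rightarrow> 'a \<times> 'f" where
  "bmul lm rm x y = (fst x * fst y, lm (fst x) (snd y) + rm (snd x) (fst y) + snd x * snd y)"

definition bpow :: "('a::calg_1 \<Rightarrow> 'f::calg \<Rightarrow> 'f) \<Rightarrow> ('f \<Rightarrow> 'a \<Rightarrow> 'f) \<Rightarrow> 'a \<times> 'f \<Rightarrow> nat \<Rightarrow> 'a \<times> 'f" where
  "bpow lm rm x n = (bmul lm rm x ^^ n) (1, 0)"

definition bprod_list :: "('a::calg_1 \<Rightarrow> 'f::calg \<Rightarrow> 'f) \<Rightarrow> ('f \<Rightarrow> 'a \<Rightarrow> 'f) \<Rightarrow> ('a \<times> 'f) list \<Rightarrow> 'a \<times> 'f" where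
  "bprod_list lm rm xs = foldr (bmul lm rm) xs (1, 0)"

inductive_set balg_gen :: "('a::calg_1 \<Rightarrow> 'f::calg \<Rightarrow> 'f) \<Rightarrow> ('f \<Rightarrow> 'a \<Rightarrow> 'f) \<Rightarrow> ('a \<times> 'f) set \<Rightarrow> ('a \<times> 'f) set"
  for lm rm S where
  zero: "(0, 0) \<in> balg_gen lm rm S"
| base: "s \<in> S \<Longrightarrow> s \<in> balg_gen lm rm S"
| add: "x \<in> balg_gen lm rm S \<Longrightarrow> y \<in> balg_gen lm rm S \<Longrightarrow> badd x y \<in> balg_gen lm rm S"
| scale: "x \<in> balg_gen lm rm S \<Longrightarrow> bscale c x \<in> balg_gen lm rm S"
| mult: "x \<in> balg_gen lm rm S \<Longrightarrow> y \<in> balg_gen lm rm S \<Longrightarrow> bmul lm rm x y \<in> balg_gen lm rm S"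

definition phiB :: "('a::calg_1 \<Rightarrow> complex) \<Rightarrow> 'a \<times> 'f::calg \<Rightarrow> complex" where
  "phiB \<phi> x = \<phi> (fst x)"

text \<open>phi_P(b) = Phi(P b) / Phi(P); note P b lies in F.\<close>
definition phiP :: "('f::calg \<Rightarrow> complex) \<Rightarrow> ('a::calg_1 \<Rightarrow> 'f \<Rightarrow> 'f) \<Rightarrow> ('f \<Rightarrow> 'a \<Rightarrow> 'f) \<Rightarrow> 'f \<Rightarrow> 'a \<times> 'f \<Rightarrow> complex" where
  "phiP \<Phi> lm rm P x = \<Phi> (snd (bmul lm rm (0, P) x)) / \<Phi> P"

definition distrB :: "('a::calg_1 \<times> 'f::calg \<Rightarrow> complex) \<Rightarrow> ('a \<Rightarrow> 'f \<Rightarrow> 'f) \<Rightarrow> ('f \<Rightarrow> 'a \<Rightarrow> 'f) \<Rightarrow> 'a \<times> 'f \<Rightarrow> nat \<Rightarrow> complex" where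
  "distrB \<omega> lm rm x = (\<lambda>n. \<omega> (bpow lm rm x n))"

definition bool_indepB :: "('a::calg_1 \<Rightarrow> 'f::calg \<Rightarrow> 'f) \<Rightarrow> ('f \<Rightarrow> 'a \<Rightarrow> 'f) \<Rightarrow> ('a \<times> 'f \<Rightarrow> complex) \<Rightarrow>
    ('a \<times> 'f) set \<Rightarrow> ('a \<times> 'f) set \<Rightarrow> bool" where
  "bool_indepB lm rm \<psi> X Y \<longleftrightarrow>
     (\<forall>idx xs. xs \<noteq> [] \<and> length idx = length xs \<and> alternating idx \<and>
        (\<forall>k<length xs. xs ! k \<in> (if idx ! k then X else Y))
        \<longrightarrow> \<psi> (bprod_list lm rm xs) = prod_list (map \<psi> xs))"

text \<open>The list gcs = [(g1,c1),...,(gn,cn)]; the word c0 g1 c1 ... gn cn in F is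
  c0 \<cdot> ((g1 c1)(g2 c2)...(gn cn)).\<close>
definition cam_indep :: "('a::calg_1 \<Rightarrow> complex) \<Rightarrow> ('f::calg \<Rightarrow> complex) \<Rightarrow> ('a \<Rightarrow> 'f \<Rightarrow> 'f) \<Rightarrow> ('f \<Rightarrow> 'a \<Rightarrow> 'f) \<Rightarrow>
    'a set \<Rightarrow> 'f set \<Rightarrow> bool" where
  "cam_indep \<phi> \<Phi> lm rm A0 F0 \<longleftrightarrow>
     (\<forall>c0 gcs. gcs \<noteq> [] \<and> c0 \<in> A0 \<and> (\<forall>(g, c) \<in> set gcs. g \<in> F0 \<and> c \<in> A0) \<longrightarrow>
        \<Phi> (lm c0 (lprod (map (\<lambda>(g, c). rm g c) gcs)))
          = \<phi> (c0 * snd (last gcs)) * prod_list (map (\<lambda>(g, c). \<phi> c) (butlast gcs))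
            * \<Phi> (lprod (map fst gcs)))"

end

theory Submission
  imports Defs "HOL-Computational_Algebra.Polynomial"
begin

(* Each distribution in question is determined by the moments of alternating products
   p_1(x_{i_1}) ... p_n(x_{i_n}) of centred polynomials in the two summands: merge equal
   neighbours, split off the constant term of a non-centred factor, and induct.  For phi these
   moments vanish by freeness of a1, a2, since phi sees only the A-component of B.

   For phi_P, B is represented faithfully by left multiplication.  A phi-centred polynomial in
   b_i = a_i + f_i is a combination of words alternating between phi-centred elements of <a_i>
   and f_i.  By cyclic-antimonotone independence phi_P of a word c_0 g_1 c_1 ... g_n c_n equals
   phi(c_0) phi(c_1) ... phi(c_n) Phi(P g_1 ... g_n) / Phi(P).  Each c_l is an alternating
   product of centred elements of <a_1>, <a_2>, so this vanishes as soon as a letter from A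
   occurs, while words in f_1, f_2 alone factorise by Boolean independence; thus b_1, b_2 are
   conditionally free with respect to (phi, phi_P).  The same formula makes
   (alg f_i, unital alg a_i) monotonically independent for phi_P, so the phi_P-distribution
   of b_i is mu_i antimonotonically convolved with nu_i. *)

lemma cscale_zero_left [simp]: "cscale 0 (x::'a::cvec) = 0"
proof -
  have "cscale 0 x = cscale (0 + 0) x" by simp
  also have "\<dots> = cscale 0 x + cscale 0 x" by (rule cscale_add_left)
  finally show ?thesis by simp
qed

lemma cscale_zero_right [simp]: "cscale c (0::'a::cvec) = 0"
proof -
  have "cscale c (0::'a) = cscale c (0 + 0)" by simp
  also have "\<dots> = cscale c 0 + cscale c 0" by (rule cscale_add_right)
  finally show ?thesis by simp
qed

lemma cscale_minus_right: "cscale c (- x) = - cscale c (x::'a::cvec)"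
  by (metis add.commute add_eq_0_iff2 cscale_add_right cscale_zero_right)

lemma cscale_diff_right: "cscale c (x - y) = cscale c x - cscale c (y::'a::cvec)"
  using cscale_add_right[of c x "- y"] by (simp add: cscale_minus_right)

lemma cscale_minus_one: "cscale (- 1) x = - (x::'a::cvec)"
  by (metis add.right_inverse add_eq_0_iff2 cscale_add_left cscale_one cscale_zero_left)

lemma cscale_sum_right: "cscale c (sum f A) = (\<Sum>i\<in>A. cscale c (f i :: 'a::cvec))"
  by (induction A rule: infinite_finite_induct) (auto simp: cscale_add_right)

lemma clinear_add: "clinear f \<Longrightarrow> f (x + y) = f x + f y"
  by (simp add: clinear_def)

lemma clinear_scale: "clinear f \<Longrightarrow> f (cscale c x) = c * f x"
  by (simp add: clinear_def)

lemma clinear_zero: "clinear f \<Longrightarrow> f 0 = 0"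
  using clinear_add[of f 0 0] by simp

lemma clinear_diff: "clinear f \<Longrightarrow> f (x - y) = f x - f y"
  by (metis add_diff_cancel clinear_add diff_add_cancel)

lemma clinear_sum: "clinear f \<Longrightarrow> f (sum g A) = (\<Sum>i\<in>A. f (g i))"
  by (induction A rule: infinite_finite_induct) (auto simp: clinear_add clinear_zero)

definition peval :: "complex poly \<Rightarrow> 'a::calg_1 \<Rightarrow> 'a" where
  "peval p x = (\<Sum>k\<le>degree p. cscale (coeff p k) (x ^ k))"

lemma peval_eq_sum_atMost:
  assumes "degree p \<le> n"
  shows "peval p x = (\<Sum>k\<le>n. cscale (coeff p k) (x ^ k))"
  unfolding peval_def
  by (rule sum.mono_neutral_left) (use assms in \<open>auto simp: coeff_eq_0\<close>)

lemma peval_0 [simp]: "peval 0 x = 0"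
  by (simp add: peval_def)

lemma peval_add: "peval (p + q) x = peval p x + peval q x"
proof -
  let ?n = "max (degree p) (degree q)"
  have "peval (p + q) x = (\<Sum>k\<le>?n. cscale (coeff (p + q) k) (x ^ k))"
    by (rule peval_eq_sum_atMost) (simp add: degree_add_le)
  also have "\<dots> = (\<Sum>k\<le>?n. cscale (coeff p k) (x ^ k)) + (\<Sum>k\<le>?n. cscale (coeff q k) (x ^ k))"
    by (simp add: cscale_add_left sum.distrib)
  also have "\<dots> = peval p x + peval q x"
    by (simp add: peval_eq_sum_atMost[symmetric])
  finally show ?thesis .
qed

lemma peval_smult: "peval (smult c p) x = cscale c (peval p x)"
proof -
  have "peval (smult c p) x = (\<Sum>k\<le>degree p. cscale (coeff (smult c p) k) (x ^ k))"
    by (rule peval_eq_sum_atMost) simp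
  then show ?thesis by (simp add: peval_def cscale_sum_right cscale_cscale)
qed

lemma peval_diff: "peval (p - q) x = peval p x - peval q x"
  using peval_add[of "p - q" q x] by (simp add: algebra_simps)

lemma peval_pCons: "peval (pCons a p) x = cscale a 1 + x * peval p x"
proof -
  have "peval (pCons a p) x = (\<Sum>k\<le>Suc (degree p). cscale (coeff (pCons a p) k) (x ^ k))"
    by (rule peval_eq_sum_atMost) (simp add: degree_pCons_le)
  also have "\<dots> = cscale a 1 + (\<Sum>k\<le>degree p. cscale (coeff p k) (x ^ Suc k))"
    by (subst sum.atMost_Suc_shift) simp
  also have "(\<Sum>k\<le>degree p. cscale (coeff p k) (x ^ Suc k)) = x * peval p x"
    by (simp add: peval_def sum_distrib_left mult_cscale_right)
  finally show ?thesis .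
qed

lemma peval_const [simp]: "peval [:c:] x = cscale c 1"
  by (simp add: peval_def)

lemma peval_X [simp]: "peval [:0, 1:] x = x"
  by (simp add: peval_pCons cscale_one)

lemma peval_mult: "peval (p * q) x = peval p x * peval q x"
proof (induction p)
  case 0
  then show ?case by simp
next
  case (pCons a p)
  have "peval (pCons a p * q) x = peval (smult a q + pCons 0 (p * q)) x" by simp
  also have "\<dots> = cscale a (peval q x) + x * (peval p x * peval q x)"
    by (simp add: peval_add peval_smult peval_pCons pCons)
  also have "\<dots> = (cscale a 1 + x * peval p x) * peval q x"
    by (simp add: distrib_right mult_cscale_left mult.assoc)
  finally show ?case by (simp add: peval_pCons)
qed

lemma peval_eq_if_moments_eq:
  assumes "clinear \<omega>1" "clinear \<omega>2" "\<And>k. \<omega>1 (x ^ k) = \<omega>2 (y ^ k)"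
  shows "\<omega>1 (peval p x) = \<omega>2 (peval p y)"
  using assms by (simp add: peval_def clinear_sum clinear_scale)

lemma ualg_gen_zero: "0 \<in> ualg_gen S"
  using ualg_gen.scale[OF ualg_gen.one, where c = 0] by simp

lemma ualg_gen_sum: "(\<And>i. i \<in> A \<Longrightarrow> f i \<in> ualg_gen S) \<Longrightarrow> sum f A \<in> ualg_gen S"
  by (induction A rule: infinite_finite_induct) (auto intro: ualg_gen_zero ualg_gen.add)

lemma ualg_gen_power: "x \<in> ualg_gen S \<Longrightarrow> x ^ k \<in> ualg_gen S"
  by (induction k) (auto intro: ualg_gen.intros)

lemma ualg_gen_diff:
  assumes "x \<in> ualg_gen S" "y \<in> ualg_gen S"
  shows "x - y \<in> ualg_gen S"
proof -
  have "x + cscale (- 1) y \<in> ualg_gen S" using assms by (intro ualg_gen.add ualg_gen.scale)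
  then show ?thesis by (simp add: cscale_minus_one)
qed

lemma ualg_gen_mono: "x \<in> ualg_gen S \<Longrightarrow> S \<subseteq> T \<Longrightarrow> x \<in> ualg_gen T"
  by (induction rule: ualg_gen.induct) (auto intro: ualg_gen.intros)

lemma alg_gen_mono: "x \<in> alg_gen S \<Longrightarrow> S \<subseteq> T \<Longrightarrow> x \<in> alg_gen T"
  by (induction rule: alg_gen.induct) (auto intro: alg_gen.intros)

lemma peval_in_ualg_gen: "peval p x \<in> ualg_gen {x}"
  unfolding peval_def
  by (intro ualg_gen_sum ualg_gen.scale ualg_gen_power ualg_gen.base) simp

inductive_set cspan :: "'a::cvec set \<Rightarrow> 'a set" for S where
  zero: "0 \<in> cspan S"
| base: "s \<in> S \<Longrightarrow> s \<in> cspan S"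
| add: "x \<in> cspan S \<Longrightarrow> y \<in> cspan S \<Longrightarrow> x + y \<in> cspan S"
| scale: "x \<in> cspan S \<Longrightarrow> cscale c x \<in> cspan S"

lemma cspan_sum: "(\<And>i. i \<in> A \<Longrightarrow> f i \<in> cspan S) \<Longrightarrow> sum f A \<in> cspan S"
  by (induction A rule: infinite_finite_induct) (auto intro: cspan.zero cspan.add)

lemma prod_list_factorization_cspan:
  fixes \<chi> :: "'a::calg_1 \<Rightarrow> complex"
  assumes lin: "clinear \<chi>"
    and Ts: "list_all2 (\<lambda>T S. T \<in> cspan S) Ts Ss"
    and gen: "\<And>Us. list_all2 (\<in>) Us Ss \<Longrightarrow> \<chi> (prod_list (pre @ Us)) = prod_list (map \<chi> (pre @ Us))"
  shows "\<chi> (prod_list (pre @ Ts)) = prod_list (map \<chi> (pre @ Ts))"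
  using Ts gen
proof (induction Ts Ss arbitrary: pre rule: list_all2_induct)
  case Nil
  then show ?case by simp
next
  case (Cons T Ts S Ss)
  have "\<chi> (prod_list (pre @ U # Ts)) = prod_list (map \<chi> (pre @ U # Ts))" if "U \<in> cspan S" for U
    using that
  proof (induction rule: cspan.induct)
    case zero
    then show ?case using lin by (simp add: clinear_zero)
  next
    case (base s)
    have "\<chi> (prod_list ((pre @ [s]) @ Ts)) = prod_list (map \<chi> ((pre @ [s]) @ Ts))"
    proof (rule Cons.IH)
      fix Us assume "list_all2 (\<in>) Us Ss"
      then have "list_all2 (\<in>) (s # Us) (S # Ss)" using base by simp
      from Cons.prems[OF this] show "\<chi> (prod_list ((pre @ [s]) @ Us)) = prod_list (map \<chi> ((pre @ [s]) @ Us))"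
        by simp
    qed
    then show ?case by simp
  next
    case (add x y)
    then show ?case using lin by (simp add: clinear_add distrib_left distrib_right)
  next
    case (scale x c)
    then show ?case using lin by (simp add: clinear_scale mult_cscale_left mult_cscale_right)
  qed
  then show ?case using Cons.hyps(1) by simp
qed

section \<open>Alternating products of polynomials\<close>

lemma prod_list_update_add:
  "k < length xs \<Longrightarrow> prod_list (xs[k := a + b]) = prod_list (xs[k := a]) + prod_list (xs[k := (b::'a::ring_1)])"
  by (induction xs arbitrary: k) (auto simp: algebra_simps split: nat.split)

lemma prod_list_update_cscale:
  "k < length xs \<Longrightarrow> prod_list (xs[k := cscale c a]) = cscale c (prod_list (xs[k := (a::'a::calg_1)]))"
  by (induction xs arbitrary: k) (auto simp: mult_cscale_left mult_cscale_right split: nat.split)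

lemma prod_list_update_one:
  "k < length xs \<Longrightarrow> prod_list (xs[k := 1]) = prod_list (take k xs @ drop (Suc k) (xs::'a::monoid_mult list))"
  by (induction xs arbitrary: k) (auto simp: mult.assoc split: nat.split)

lemma prod_list_map_concat: "prod_list (map f (concat xss)) = prod_list (map (\<lambda>xs. prod_list (map f xs)) xss)"
  by (induction xss) auto

lemma list_all2_choice: "(\<And>x. x \<in> set xs \<Longrightarrow> \<exists>y. P x y) \<Longrightarrow> \<exists>ys. list_all2 P xs ys"
proof (induction xs)
  case (Cons x xs)
  obtain y where "P x y" using Cons.prems by auto
  moreover obtain ys where "list_all2 P xs ys" using Cons by auto
  ultimately show ?case by auto
next
  case Nil
  show ?case by (rule exI[of _ "[]"]) simp
qed

lemma list_all2_pairs_eq_map: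
  "list_all2 (\<lambda>(x, z) (g, c). x = f g \<and> z = h c \<and> Q g c) xzs gcs \<Longrightarrow>
    xzs = map (\<lambda>(g, c). (f g, h c)) gcs \<and> (\<forall>(g, c)\<in>set gcs. Q g c)"
  by (induction rule: list_all2_induct) auto

definition poly_word :: "(bool \<Rightarrow> 'a::calg_1) \<Rightarrow> (bool \<times> complex poly) list \<Rightarrow> 'a" where
  "poly_word x zs = prod_list (map (\<lambda>(i, p). peval p (x i)) zs)"

lemma poly_word_Nil [simp]: "poly_word x [] = 1"
  by (simp add: poly_word_def)

lemma poly_word_split_constant:
  assumes k: "k < length zs" and zk: "zs ! k = (i, p)"
  shows "poly_word x zs
    = poly_word x (zs[k := (i, p - [:c:])]) + cscale c (poly_word x (take k zs @ drop (Suc k) zs))"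
proof -
  let ?ms = "map (\<lambda>(i, p). peval p (x i)) zs"
  have "?ms ! k = peval (p - [:c:]) (x i) + cscale c 1"
    using k zk by (simp add: peval_diff)
  then have "poly_word x zs = prod_list (?ms[k := peval (p - [:c:]) (x i) + cscale c 1])"
    by (metis list_update_id poly_word_def)
  then show ?thesis
    using k zk by (simp add: poly_word_def map_update prod_list_update_add prod_list_update_cscale
        prod_list_update_one take_map drop_map del: list_update_id)
qed

lemma poly_word_merge:
  assumes "Suc k < length zs" "fst (zs ! k) = fst (zs ! Suc k)"
  shows "poly_word x zs
    = poly_word x (take k zs @ (fst (zs ! k), snd (zs ! k) * snd (zs ! Suc k)) # drop (Suc (Suc k)) zs)"
proof -
  have "zs = take k zs @ zs ! k # zs ! Suc k # drop (Suc (Suc k)) zs"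
    using assms(1) by (metis Cons_nth_drop_Suc Suc_lessD append_take_drop_id)
  then have "poly_word x zs = poly_word x (take k zs @ zs ! k # zs ! Suc k # drop (Suc (Suc k)) zs)"
    by simp
  also have "\<dots> = poly_word x (take k zs @ (fst (zs ! k), snd (zs ! k) * snd (zs ! Suc k)) # drop (Suc (Suc k)) zs)"
    using assms(2) by (cases "zs ! k"; cases "zs ! Suc k") (simp add: poly_word_def peval_mult mult.assoc)
  finally show ?thesis .
qed

lemma clinear_poly_word_split_constant:
  assumes "clinear \<chi>" "k < length zs" "zs ! k = (i, p)"
  shows "\<chi> (poly_word x zs)
    = \<chi> (poly_word x (zs[k := (i, p - [:c:])])) + c * \<chi> (poly_word x (take k zs @ drop (Suc k) zs))"
  by (simp only: poly_word_split_constant[OF assms(2,3), where x = x and c = c] clinear_add[OF assms(1)] clinear_scale[OF assms(1)])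

definition uncentered :: "('a::calg_1 \<Rightarrow> complex) \<Rightarrow> (bool \<Rightarrow> 'a) \<Rightarrow> (bool \<times> complex poly) list \<Rightarrow> nat set"
  where "uncentered \<omega> x zs = {k. k < length zs \<and> \<omega> (peval (snd (zs ! k)) (x (fst (zs ! k)))) \<noteq> 0}"

lemma card_uncentered_update:
  assumes \<omega>: "clinear \<omega>" "\<omega> 1 = 1" and k: "k \<in> uncentered \<omega> x zs" and zk: "zs ! k = (i, p)"
  shows "card (uncentered \<omega> x (zs[k := (i, p - [:\<omega> (peval p (x i)):])])) < card (uncentered \<omega> x zs)"
proof -
  have "uncentered \<omega> x (zs[k := (i, p - [:\<omega> (peval p (x i)):])]) = uncentered \<omega> x zs - {k}"
    using k zk \<omega> by (auto simp: uncentered_def nth_list_update peval_diff clinear_diff clinear_scale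
        split: if_splits)
  then show ?thesis
    using k by (intro psubset_card_mono) (auto simp: uncentered_def)
qed

text \<open>Two unital functionals agreeing on alternating products of \<open>\<omega>\<close>-centred polynomials agree on
  all products: adjacent factors with equal index are merged, and a non-centred factor \<open>q\<close> is
  replaced by \<open>q - \<omega>(q)\<close>, the error term being a shorter product.\<close>
lemma poly_word_eq_if_centered_eq:
  fixes x :: "bool \<Rightarrow> 'a::calg_1" and y :: "bool \<Rightarrow> 'b::calg_1"
  assumes \<chi>1: "clinear \<chi>1" "\<chi>1 1 = 1" and \<chi>2: "clinear \<chi>2" "\<chi>2 1 = 1" and \<omega>: "clinear \<omega>" "\<omega> 1 = 1"
    and centered: "\<And>zs. zs \<noteq> [] \<Longrightarrow> alternating (map fst zs) \<Longrightarrow>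
      \<forall>(i, p)\<in>set zs. \<omega> (peval p (x i)) = 0 \<Longrightarrow> \<chi>1 (poly_word x zs) = \<chi>2 (poly_word y zs)"
  shows "\<chi>1 (poly_word x zs) = \<chi>2 (poly_word y zs)"
proof (induction "length zs" arbitrary: zs rule: less_induct)
  case less
  note shorter = less
  have "\<chi>1 (poly_word x zs') = \<chi>2 (poly_word y zs')" if "length zs' = length zs" for zs'
    using that
  proof (induction "card (uncentered \<omega> x zs')" arbitrary: zs' rule: less_induct)
    case less
    consider (empty) "zs' = []"
      | (repeat) k where "Suc k < length zs'" "fst (zs' ! k) = fst (zs' ! Suc k)"
      | (centered) "zs' \<noteq> []" "alternating (map fst zs')" "uncentered \<omega> x zs' = {}"
      | (uncentered) k where "k \<in> uncentered \<omega> x zs'"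
      by (auto simp: alternating_def)
    then show ?case
    proof cases
      case empty
      then show ?thesis using \<chi>1 \<chi>2 by simp
    next
      case (repeat k)
      let ?merged = "take k zs' @ (fst (zs' ! k), snd (zs' ! k) * snd (zs' ! Suc k)) # drop (Suc (Suc k)) zs'"
      have "\<chi>1 (poly_word x ?merged) = \<chi>2 (poly_word y ?merged)"
        using repeat less.prems by (intro shorter) auto
      then show ?thesis using poly_word_merge[OF repeat] by metis
    next
      case centered
      have "\<omega> (peval p (x i)) = 0" if "(i, p) \<in> set zs'" for i p
        using that centered(3) by (fastforce simp: uncentered_def in_set_conv_nth)
      then show ?thesis using centered(1,2) by (intro assms(7)) auto
    next
      case (uncentered k)
      then have k: "k < length zs'" by (simp add: uncentered_def)
      obtain i p where zk: "zs' ! k = (i, p)" by fastforce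
      define m where "m = \<omega> (peval p (x i))"
      let ?centered = "zs'[k := (i, p - [:m:])]" and ?rest = "take k zs' @ drop (Suc k) zs'"
      have "\<chi>1 (poly_word x ?centered) = \<chi>2 (poly_word y ?centered)"
        using less card_uncentered_update[OF \<omega> uncentered zk] by (simp add: m_def)
      moreover have "\<chi>1 (poly_word x ?rest) = \<chi>2 (poly_word y ?rest)"
        using k less.prems by (intro shorter) auto
      ultimately show ?thesis
        by (simp only: clinear_poly_word_split_constant[OF \<chi>1(1) k zk, of x m]
            clinear_poly_word_split_constant[OF \<chi>2(1) k zk, of y m])
    qed
  qed
  then show ?case by simp
qed

definition word :: "'a::monoid_mult \<Rightarrow> 'a \<Rightarrow> bool list \<Rightarrow> 'a" where
  "word y1 y2 w = prod_list (map (\<lambda>b. if b then y1 else y2) w)"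

fun sum_words :: "(bool list \<Rightarrow> 'b::comm_monoid_add) \<Rightarrow> nat \<Rightarrow> 'b" where
  "sum_words g 0 = g []"
| "sum_words g (Suc n) = sum_words (\<lambda>w. g (True # w)) n + sum_words (\<lambda>w. g (False # w)) n"

lemma mult_power_add_eq_sum_words:
  "c * (y1 + y2) ^ n = sum_words (\<lambda>w. c * word y1 y2 w) n" for c y1 y2 :: "'a::ring_1"
proof (induction n arbitrary: c)
  case 0
  then show ?case by (simp add: word_def)
next
  case (Suc n)
  have "c * (y1 + y2) ^ Suc n = (c * y1) * (y1 + y2) ^ n + (c * y2) * (y1 + y2) ^ n"
    by (simp add: algebra_simps)
  also have "\<dots> = sum_words (\<lambda>w. (c * y1) * word y1 y2 w) n + sum_words (\<lambda>w. (c * y2) * word y1 y2 w) n"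
    by (simp only: Suc)
  also have "\<dots> = sum_words (\<lambda>w. c * word y1 y2 w) (Suc n)"
    by (simp add: word_def mult.assoc)
  finally show ?case .
qed

lemma power_add_eq_sum_words: "(y1 + y2) ^ n = sum_words (word y1 y2) n" for y1 y2 :: "'a::ring_1"
  using mult_power_add_eq_sum_words[of 1 y1 y2 n] by simp

lemma clinear_sum_words: "clinear \<omega> \<Longrightarrow> \<omega> (sum_words g n) = sum_words (\<lambda>w. \<omega> (g w)) n"
  by (induction n arbitrary: g) (simp_all add: clinear_add)

lemma moments_add_eq_if_words_eq:
  fixes y1 y2 :: "'a::calg_1" and z1 z2 :: "'b::calg_1"
  assumes "clinear \<omega>1" "clinear \<omega>2" "\<And>w. \<omega>1 (word y1 y2 w) = \<omega>2 (word z1 z2 w)"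
  shows "\<omega>1 ((y1 + y2) ^ n) = \<omega>2 ((z1 + z2) ^ n)"
proof -
  have "\<omega>1 ((y1 + y2) ^ n) = sum_words (\<lambda>w. \<omega>1 (word y1 y2 w)) n"
    by (simp only: power_add_eq_sum_words clinear_sum_words[OF assms(1)])
  also have "\<dots> = sum_words (\<lambda>w. \<omega>2 (word z1 z2 w)) n"
    by (simp only: assms(3))
  also have "\<dots> = \<omega>2 ((z1 + z2) ^ n)"
    by (simp only: power_add_eq_sum_words clinear_sum_words[OF assms(2)])
  finally show ?thesis .
qed

lemma word_eq_poly_word: "word (x True) (x False) w = poly_word x (map (\<lambda>b. (b, [:0, 1:])) w)"
  by (induction w) (auto simp: word_def poly_word_def)

lemma moments_add_eq_if_poly_word_eq:
  assumes "clinear \<omega>1" "clinear \<omega>2" "\<And>zs. \<omega>1 (poly_word x zs) = \<omega>2 (poly_word y zs)"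
  shows "\<omega>1 ((x True + x False) ^ n) = \<omega>2 ((y True + y False) ^ n)"
  using assms(1,2) by (rule moments_add_eq_if_words_eq) (simp only: word_eq_poly_word[of x] word_eq_poly_word[of y] assms(3))

lemma alternating_centered_peval:
  assumes "zs \<noteq> []" "alternating (map fst zs)" "\<forall>(i, p)\<in>set zs. \<omega> (peval p (x i)) = 0"
  defines "xs \<equiv> map (\<lambda>(i, p). peval p (x i)) zs"
  shows "xs \<noteq> [] \<and> length (map fst zs) = length xs \<and> alternating (map fst zs) \<and>
    (\<forall>k<length xs. xs ! k \<in> (if map fst zs ! k then ualg_gen {x True} else ualg_gen {x False})
       \<and> \<omega> (xs ! k) = 0)"
proof -
  have "xs ! k \<in> (if map fst zs ! k then ualg_gen {x True} else ualg_gen {x False}) \<and> \<omega> (xs ! k) = 0"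
    if k: "k < length xs" for k
  proof -
    obtain i p where zk: "zs ! k = (i, p)" by fastforce
    have "(i, p) \<in> set zs" using k zk by (metis xs_def length_map nth_mem)
    then show ?thesis
      using assms(3) k zk peval_in_ualg_gen[of p "x i"] by (cases i) (auto simp: xs_def)
  qed
  then show ?thesis using assms(1,2) by (simp add: xs_def)
qed

lemma free2_poly_word_centered:
  assumes "free2 \<omega> (ualg_gen {x True}) (ualg_gen {x False})"
    and "zs \<noteq> []" "alternating (map fst zs)" "\<forall>(i, p)\<in>set zs. \<omega> (peval p (x i)) = 0"
  shows "\<omega> (poly_word x zs) = 0"
  using assms(1) alternating_centered_peval[OF assms(2-4)] unfolding free2_def poly_word_def by blast

lemma cfree2_poly_word_centered:
  assumes "cfree2 \<omega> \<psi> (ualg_gen {x True}) (ualg_gen {x False})"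
    and "zs \<noteq> []" "alternating (map fst zs)" "\<forall>(i, p)\<in>set zs. \<omega> (peval p (x i)) = 0"
  shows "\<psi> (poly_word x zs) = prod_list (map (\<lambda>(i, p). \<psi> (peval p (x i))) zs)"
proof -
  have "\<psi> (prod_list (map (\<lambda>(i, p). peval p (x i)) zs)) = prod_list (map \<psi> (map (\<lambda>(i, p). peval p (x i)) zs))"
    using assms(1) alternating_centered_peval[OF assms(2-4)] unfolding cfree2_def by blast
  then show ?thesis by (simp add: poly_word_def comp_def case_prod_unfold)
qed

lemma free2_moments_add_unique:
  fixes x :: "bool \<Rightarrow> 'a::calg_1" and y :: "bool \<Rightarrow> 'b::calg_1"
  assumes \<omega>1: "cstate \<omega>1" "free2 \<omega>1 (ualg_gen {x True}) (ualg_gen {x False})"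
    and \<omega>2: "cstate \<omega>2" "free2 \<omega>2 (ualg_gen {y True}) (ualg_gen {y False})"
    and moments: "\<And>i k. \<omega>1 (x i ^ k) = \<omega>2 (y i ^ k)"
  shows "\<omega>1 ((x True + x False) ^ n) = \<omega>2 ((y True + y False) ^ n)"
proof (rule moments_add_eq_if_poly_word_eq)
  show lin: "clinear \<omega>1" "clinear \<omega>2" using \<omega>1 \<omega>2 by (simp_all add: cstate_def)
  have peval_eq: "\<omega>1 (peval p (x i)) = \<omega>2 (peval p (y i))" for p i
    using lin moments by (rule peval_eq_if_moments_eq)
  show "\<omega>1 (poly_word x zs) = \<omega>2 (poly_word y zs)" for zs
  proof (rule poly_word_eq_if_centered_eq)
    show "clinear \<omega>1" "\<omega>1 1 = 1" "clinear \<omega>2" "\<omega>2 1 = 1" "clinear \<omega>1" "\<omega>1 1 = 1"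
      using \<omega>1 \<omega>2 by (simp_all add: cstate_def)
    fix zs :: "(bool \<times> complex poly) list"
    assume zs: "zs \<noteq> []" "alternating (map fst zs)" "\<forall>(i, p)\<in>set zs. \<omega>1 (peval p (x i)) = 0"
    then have "\<forall>(i, p)\<in>set zs. \<omega>2 (peval p (y i)) = 0" using peval_eq by auto
    then show "\<omega>1 (poly_word x zs) = \<omega>2 (poly_word y zs)"
      using free2_poly_word_centered[OF \<omega>1(2) zs] free2_poly_word_centered[OF \<omega>2(2) zs(1,2)] by simp
  qed
qed

lemma free_conv_is_distr_add:
  assumes "cstate \<phi>" "free2 \<phi> (ualg_gen {a1}) (ualg_gen {a2})"
  shows "free_conv_is TYPE('c::calg_1) (distr \<phi> a1) (distr \<phi> a2) (distr \<phi> (a1 + a2))"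
  unfolding free_conv_is_def
proof (intro allI impI ext)
  fix \<omega> :: "'c \<Rightarrow> complex" and y1 y2 n
  assume realisation: "cstate \<omega> \<and> free2 \<omega> (ualg_gen {y1}) (ualg_gen {y2}) \<and>
    distr \<omega> y1 = distr \<phi> a1 \<and> distr \<omega> y2 = distr \<phi> a2"
  let ?y = "\<lambda>i. if i then y1 else y2" and ?a = "\<lambda>i. if i then a1 else a2"
  have \<omega>: "cstate \<omega>" "free2 \<omega> (ualg_gen {?y True}) (ualg_gen {?y False})"
    using realisation by simp_all
  have \<phi>: "free2 \<phi> (ualg_gen {?a True}) (ualg_gen {?a False})"
    using assms(2) by simp
  have moments: "\<omega> (?y i ^ k) = \<phi> (?a i ^ k)" for i k
    using realisation by (cases i) (simp_all add: distr_def fun_eq_iff)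
  have "\<omega> ((?y True + ?y False) ^ n) = \<phi> ((?a True + ?a False) ^ n)"
    using \<omega> assms(1) \<phi> moments by (rule free2_moments_add_unique)
  then show "distr \<omega> (y1 + y2) n = distr \<phi> (a1 + a2) n"
    by (simp add: distr_def)
qed

lemma cfree2_moments_add_unique:
  fixes x :: "bool \<Rightarrow> 'a::calg_1" and y :: "bool \<Rightarrow> 'b::calg_1"
  assumes x: "cstate \<omega>" "cstate \<psi>" "cfree2 \<omega> \<psi> (ualg_gen {x True}) (ualg_gen {x False})"
    and y: "clinear \<phi>'" "cstate \<psi>'"
    and y_cfree: "\<And>zs. alternating (map fst zs) \<Longrightarrow> \<forall>(i, p)\<in>set zs. \<phi>' (peval p (y i)) = 0 \<Longrightarrow>
      \<psi>' (poly_word y zs) = prod_list (map (\<lambda>(i, p). \<psi>' (peval p (y i))) zs)"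
    and \<omega>_moments: "\<And>i k. \<omega> (x i ^ k) = \<phi>' (y i ^ k)"
    and \<psi>_moments: "\<And>i k. \<psi> (x i ^ k) = \<psi>' (y i ^ k)"
  shows "\<psi> ((x True + x False) ^ n) = \<psi>' ((y True + y False) ^ n)"
proof (rule moments_add_eq_if_poly_word_eq)
  have lin: "clinear \<omega>" "clinear \<psi>" "clinear \<psi>'" using x y by (simp_all add: cstate_def)
  then show "clinear \<psi>" "clinear \<psi>'" by simp_all
  have \<omega>_peval: "\<omega> (peval p (x i)) = \<phi>' (peval p (y i))" for p i
    using lin(1) y(1) \<omega>_moments by (rule peval_eq_if_moments_eq)
  have \<psi>_peval: "\<psi> (peval p (x i)) = \<psi>' (peval p (y i))" for p i
    using lin(2,3) \<psi>_moments by (rule peval_eq_if_moments_eq)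
  show "\<psi> (poly_word x zs) = \<psi>' (poly_word y zs)" for zs
  proof (rule poly_word_eq_if_centered_eq)
    show "clinear \<psi>" "\<psi> 1 = 1" "clinear \<psi>'" "\<psi>' 1 = 1" "clinear \<omega>" "\<omega> 1 = 1"
      using x y by (simp_all add: cstate_def)
    fix zs :: "(bool \<times> complex poly) list"
    assume zs: "zs \<noteq> []" "alternating (map fst zs)" "\<forall>(i, p)\<in>set zs. \<omega> (peval p (x i)) = 0"
    have "\<psi> (poly_word x zs) = prod_list (map (\<lambda>(i, p). \<psi> (peval p (x i))) zs)"
      using x(3) zs by (rule cfree2_poly_word_centered)
    also have "\<dots> = prod_list (map (\<lambda>(i, p). \<psi>' (peval p (y i))) zs)"
      by (simp add: \<psi>_peval case_prod_beta)
    also have "\<dots> = \<psi>' (poly_word y zs)"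
      using zs \<omega>_peval by (intro y_cfree[symmetric]) auto
    finally show "\<psi> (poly_word x zs) = \<psi>' (poly_word y zs)" .
  qed
qed

text \<open>\<open>runs w = (r\<^sub>0, [r\<^sub>1, \<dots>, r\<^sub>m])\<close> when \<open>w\<close> spells \<open>y\<^sub>1\<^sup>r\<^sup>0 y\<^sub>2 y\<^sub>1\<^sup>r\<^sup>1 \<cdots> y\<^sub>2 y\<^sub>1\<^sup>r\<^sup>m\<close>.\<close>
fun runs :: "bool list \<Rightarrow> nat \<times> nat list" where
  "runs [] = (0, [])"
| "runs (True # w) = (Suc (fst (runs w)), snd (runs w))"
| "runs (False # w) = (0, fst (runs w) # snd (runs w))"

lemma word_eq_runs:
  "word y1 y2 w = y1 ^ fst (runs w) * prod_list (map (\<lambda>r. y2 * y1 ^ r) (snd (runs w)))"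
  by (induction w rule: runs.induct) (simp_all add: word_def mult.assoc)

lemma mono_indep_word:
  fixes \<omega> :: "'a::calg_1 \<Rightarrow> complex"
  assumes "cstate \<omega>" and mono: "mono_indep \<omega> (alg_gen {y2}) (ualg_gen {y1})"
  shows "\<omega> (word y1 y2 w) = \<omega> (y1 ^ fst (runs w)) * \<omega> (y2 ^ length (snd (runs w)))
    * prod_list (map (\<lambda>r. \<omega> (y1 ^ r)) (snd (runs w)))"
proof (cases "snd (runs w) = []")
  case True
  then show ?thesis using assms(1) by (simp add: word_eq_runs cstate_def)
next
  case False
  let ?xzs = "map (\<lambda>r. (y2, y1 ^ r)) (snd (runs w))"
  have "y1 ^ fst (runs w) \<in> ualg_gen {y1}"
    and "\<forall>(x, z)\<in>set ?xzs. x \<in> alg_gen {y2} \<and> z \<in> ualg_gen {y1}"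
    by (auto intro: alg_gen.base ualg_gen_power ualg_gen.base)
  then have "\<omega> (y1 ^ fst (runs w) * prod_list (map (\<lambda>(x, z). x * z) ?xzs))
      = \<omega> (prod_list (map fst ?xzs)) * \<omega> (y1 ^ fst (runs w)) * prod_list (map (\<lambda>(x, z). \<omega> z) ?xzs)"
    using mono[unfolded mono_indep_def, rule_format, of ?xzs "y1 ^ fst (runs w)"] False by blast
  then show ?thesis by (simp add: word_eq_runs comp_def map_replicate_const)
qed

lemma mono_indep_moments_add_unique:
  fixes \<omega>1 :: "'a::calg_1 \<Rightarrow> complex" and \<omega>2 :: "'b::calg_1 \<Rightarrow> complex"
  assumes "cstate \<omega>1" "mono_indep \<omega>1 (alg_gen {y2}) (ualg_gen {y1})"
    and "cstate \<omega>2" "mono_indep \<omega>2 (alg_gen {z2}) (ualg_gen {z1})"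
    and "\<And>r. \<omega>1 (y1 ^ r) = \<omega>2 (z1 ^ r)" "\<And>r. \<omega>1 (y2 ^ r) = \<omega>2 (z2 ^ r)"
  shows "\<omega>1 ((y1 + y2) ^ n) = \<omega>2 ((z1 + z2) ^ n)"
proof (rule moments_add_eq_if_words_eq)
  show "clinear \<omega>1" "clinear \<omega>2" using assms(1,3) by (simp_all add: cstate_def)
  show "\<omega>1 (word y1 y2 w) = \<omega>2 (word z1 z2 w)" for w
    by (simp only: mono_indep_word[OF assms(1,2)] mono_indep_word[OF assms(3,4)] assms(5,6))
qed

section \<open>A unital algebra of linear maps on \<open>\<A> \<times> \<F>\<close>\<close>

text \<open>\<open>\<B>\<close> is given by operations on pairs, not as a type of class \<open>calg_1\<close>; its left regular
  representation embeds it into the following algebra, to which the results above apply.\<close>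

definition lin_end :: "('a::calg_1 \<times> 'f::calg \<Rightarrow> 'a \<times> 'f) \<Rightarrow> bool" where
  "lin_end T \<longleftrightarrow> (\<forall>y z. T (badd y z) = badd (T y) (T z)) \<and> (\<forall>c y. T (bscale c y) = bscale c (T y))"

typedef (overloaded) ('a::calg_1, 'f::calg) lin_endo = "{T :: 'a \<times> 'f \<Rightarrow> 'a \<times> 'f. lin_end T}"
  by (rule exI[of _ id]) (simp add: lin_end_def)

setup_lifting type_definition_lin_endo

lemma Rep_lin_endo_badd: "Rep_lin_endo T (badd y z) = badd (Rep_lin_endo T y) (Rep_lin_endo T z)"
  using Rep_lin_endo[of T] unfolding lin_end_def by blast

lemma Rep_lin_endo_bscale: "Rep_lin_endo T (bscale c y) = bscale c (Rep_lin_endo T y)"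
  using Rep_lin_endo[of T] unfolding lin_end_def by blast

lemma lin_end_zero: "lin_end (\<lambda>_. (0, 0))"
  by (simp add: lin_end_def badd_def bscale_def)

lemma lin_end_id: "lin_end id"
  by (simp add: lin_end_def)

lemma lin_end_badd: "lin_end T \<Longrightarrow> lin_end S \<Longrightarrow> lin_end (\<lambda>y. badd (T y) (S y))"
  by (simp add: lin_end_def badd_def bscale_def cscale_add_right algebra_simps)

lemma lin_end_uminus: "lin_end T \<Longrightarrow> lin_end (\<lambda>y. bscale (- 1) (T y))"
  by (simp add: lin_end_def badd_def bscale_def cscale_add_right cscale_cscale mult.commute)

lemma lin_end_comp: "lin_end T \<Longrightarrow> lin_end S \<Longrightarrow> lin_end (T \<circ> S)"
  unfolding lin_end_def by (metis comp_apply)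

lemma lin_end_bscale: "lin_end T \<Longrightarrow> lin_end (\<lambda>y. bscale c (T y))"
  by (simp add: lin_end_def badd_def bscale_def cscale_add_right cscale_cscale mult.commute)

instantiation lin_endo :: (calg_1, calg) "{zero, one, plus, minus, uminus, times, cscale}"
begin

lift_definition zero_lin_endo :: "('a, 'b) lin_endo" is "\<lambda>_. (0, 0)"
  by (simp add: lin_end_zero)

lift_definition one_lin_endo :: "('a, 'b) lin_endo" is id
  by (simp add: lin_end_id)

lift_definition plus_lin_endo :: "('a, 'b) lin_endo \<Rightarrow> ('a, 'b) lin_endo \<Rightarrow> ('a, 'b) lin_endo"
  is "\<lambda>T S y. badd (T y) (S y)"
  by (simp add: lin_end_badd)

lift_definition uminus_lin_endo :: "('a, 'b) lin_endo \<Rightarrow> ('a, 'b) lin_endo"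
  is "\<lambda>T y. bscale (- 1) (T y)"
  by (simp add: lin_end_uminus)

definition minus_lin_endo :: "('a, 'b) lin_endo \<Rightarrow> ('a, 'b) lin_endo \<Rightarrow> ('a, 'b) lin_endo" where
  "minus_lin_endo T S = T + - S"

lift_definition times_lin_endo :: "('a, 'b) lin_endo \<Rightarrow> ('a, 'b) lin_endo \<Rightarrow> ('a, 'b) lin_endo"
  is "(\<circ>)"
  by (simp add: lin_end_comp)

lift_definition cscale_lin_endo :: "complex \<Rightarrow> ('a, 'b) lin_endo \<Rightarrow> ('a, 'b) lin_endo"
  is "\<lambda>c T y. bscale c (T y)"
  by (simp add: lin_end_bscale)

instance ..

end

lemma lin_endo_eqI: "(\<And>y. Rep_lin_endo T y = Rep_lin_endo S y) \<Longrightarrow> T = S"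
  by (metis Rep_lin_endo_inject ext)

instance lin_endo :: (calg_1, calg) calg_1
proof
  fix a b c :: "('a, 'b) lin_endo" and x y :: complex
  show "a + b + c = a + (b + c)"
    by (rule lin_endo_eqI) (simp add: plus_lin_endo.rep_eq badd_def add.assoc)
  show "a + b = b + a"
    by (rule lin_endo_eqI) (simp add: plus_lin_endo.rep_eq badd_def add.commute)
  show "0 + a = a"
    by (rule lin_endo_eqI) (simp add: plus_lin_endo.rep_eq zero_lin_endo.rep_eq badd_def)
  show "- a + a = 0"
    by (rule lin_endo_eqI)
      (simp add: plus_lin_endo.rep_eq zero_lin_endo.rep_eq uminus_lin_endo.rep_eq badd_def bscale_def
        cscale_minus_one)
  show "a - b = a + - b"
    by (simp add: minus_lin_endo_def)
  show "cscale x (a + b) = cscale x a + cscale x b"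
    by (rule lin_endo_eqI)
      (simp add: plus_lin_endo.rep_eq cscale_lin_endo.rep_eq badd_def bscale_def cscale_add_right)
  show "cscale (x + y) a = cscale x a + cscale y a"
    by (rule lin_endo_eqI)
      (simp add: plus_lin_endo.rep_eq cscale_lin_endo.rep_eq badd_def bscale_def cscale_add_left)
  show "cscale x (cscale y a) = cscale (x * y) a"
    by (rule lin_endo_eqI) (simp add: cscale_lin_endo.rep_eq bscale_def cscale_cscale)
  show "cscale 1 a = a"
    by (rule lin_endo_eqI) (simp add: cscale_lin_endo.rep_eq bscale_def cscale_one)
  show "a * b * c = a * (b * c)"
    by (rule lin_endo_eqI) (simp add: times_lin_endo.rep_eq)
  show "(a + b) * c = a * c + b * c"
    by (rule lin_endo_eqI) (simp add: times_lin_endo.rep_eq plus_lin_endo.rep_eq)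
  show "a * (b + c) = a * b + a * c"
    by (rule lin_endo_eqI) (simp add: times_lin_endo.rep_eq plus_lin_endo.rep_eq Rep_lin_endo_badd)
  show "cscale x a * b = cscale x (a * b)"
    by (rule lin_endo_eqI) (simp add: times_lin_endo.rep_eq cscale_lin_endo.rep_eq)
  show "a * cscale x b = cscale x (a * b)"
    by (rule lin_endo_eqI) (simp add: times_lin_endo.rep_eq cscale_lin_endo.rep_eq Rep_lin_endo_bscale)
  show "1 * a = a"
    by (rule lin_endo_eqI) (simp add: times_lin_endo.rep_eq one_lin_endo.rep_eq)
  show "a * 1 = a"
    by (rule lin_endo_eqI) (simp add: times_lin_endo.rep_eq one_lin_endo.rep_eq)
  show "(0::('a, 'b) lin_endo) \<noteq> 1"
  proof
    assume "(0::('a, 'b) lin_endo) = 1"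
    then have "Rep_lin_endo (0::('a, 'b) lin_endo) (1, 0) = Rep_lin_endo 1 (1, 0)" by simp
    then show False by (simp add: zero_lin_endo.rep_eq one_lin_endo.rep_eq)
  qed
qed

lemma lprod_Cons: "ys \<noteq> [] \<Longrightarrow> lprod (x # ys) = x * lprod ys"
  by (cases ys) auto

text \<open>Words in \<open>\<B>\<close> are lists of letters: \<open>Inl (c, i)\<close> is \<open>c \<in> \<A>\<close>, tagged with the index \<open>i\<close> of
  the generator \<open>a\<^sub>i\<close> it belongs to, and \<open>Inr g\<close> is \<open>g \<in> \<F>\<close>.\<close>
definition letter_val :: "'a::calg_1 \<times> bool + 'f::calg \<Rightarrow> 'a \<times> 'f" where
  "letter_val l = (case l of Inl (c, i) \<Rightarrow> (c, 0) | Inr g \<Rightarrow> (0, g))"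

lemma letter_val_simps [simp]: "letter_val (Inl (c, i)) = (c, 0)" "letter_val (Inr g) = (0, g)"
  by (simp_all add: letter_val_def)

text \<open>\<open>normal_form w = (c\<^sub>0, [(g\<^sub>1, c\<^sub>1), \<dots>, (g\<^sub>n, c\<^sub>n)])\<close> when \<open>w\<close> evaluates to
  \<open>c\<^sub>0 g\<^sub>1 c\<^sub>1 \<cdots> g\<^sub>n c\<^sub>n\<close>, the shape in which cyclic-antimonotone independence applies.\<close>
fun normal_form :: "('a::calg_1 \<times> bool + 'f) list \<Rightarrow> 'a \<times> ('f \<times> 'a) list" where
  "normal_form [] = (1, [])"
| "normal_form (Inl (c, i) # w) = (c * fst (normal_form w), snd (normal_form w))"
| "normal_form (Inr g # w) = (1, (g, fst (normal_form w)) # snd (normal_form w))"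

locale bimodule_algebra =
  fixes lm :: "'a::calg_1 \<Rightarrow> 'f::calg \<Rightarrow> 'f" and rm :: "'f \<Rightarrow> 'a \<Rightarrow> 'f"
  assumes bimod_alg: "bimod_alg lm rm"
begin

lemma lm_add_left: "lm (a + b) f = lm a f + lm b f"
  and lm_add_right: "lm a (f + g) = lm a f + lm a g"
  and lm_cscale_left: "lm (cscale c a) f = cscale c (lm a f)"
  and lm_cscale_right: "lm a (cscale c f) = cscale c (lm a f)"
  and rm_add_right: "rm f (a + b) = rm f a + rm f b"
  and rm_add_left: "rm (f + g) a = rm f a + rm g a"
  and rm_cscale_right: "rm f (cscale c a) = cscale c (rm f a)"
  and rm_cscale_left: "rm (cscale c f) a = cscale c (rm f a)"
  and lm_mult: "lm (a * b) f = lm a (lm b f)"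
  and rm_mult: "rm f (a * b) = rm (rm f a) b"
  and rm_lm: "rm (lm a f) b = lm a (rm f b)"
  and lm_one [simp]: "lm 1 f = f"
  and rm_one [simp]: "rm f 1 = f"
  and lm_times: "lm a (f * g) = lm a f * g"
  and rm_times: "rm (f * g) a = f * rm g a"
  and rm_times_eq_times_lm: "rm f a * g = f * lm a g"
  using bimod_alg by (simp_all add: bimod_alg_def)

lemma lm_zero_left [simp]: "lm 0 f = 0"
  using lm_add_left[of 0 0 f] by simp

lemma lm_zero_right [simp]: "lm a 0 = 0"
  using lm_add_right[of a 0 0] by simp

lemma rm_zero_left [simp]: "rm 0 a = 0"
  using rm_add_left[of 0 0 a] by simp

lemma rm_zero_right [simp]: "rm f 0 = 0"
  using rm_add_right[of f 0 0] by simp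

abbreviation mul :: "'a \<times> 'f \<Rightarrow> 'a \<times> 'f \<Rightarrow> 'a \<times> 'f" where
  "mul \<equiv> bmul lm rm"

lemma mul_eq: "mul x y = (fst x * fst y, lm (fst x) (snd y) + rm (snd x) (fst y) + snd x * snd y)"
  by (simp add: bmul_def)

lemma mul_assoc: "mul (mul x y) z = mul x (mul y z)"
  by (simp add: mul_eq lm_add_right rm_add_left lm_mult rm_mult rm_lm lm_times rm_times
      rm_times_eq_times_lm algebra_simps)

lemma mul_badd_left: "mul (badd x y) z = badd (mul x z) (mul y z)"
  by (simp add: mul_eq badd_def lm_add_left rm_add_left algebra_simps)

lemma mul_badd_right: "mul x (badd y z) = badd (mul x y) (mul x z)"
  by (simp add: mul_eq badd_def lm_add_right rm_add_right algebra_simps)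

lemma mul_bscale_left: "mul (bscale c x) z = bscale c (mul x z)"
  by (simp add: mul_eq bscale_def lm_cscale_left rm_cscale_left mult_cscale_left cscale_add_right)

lemma mul_bscale_right: "mul x (bscale c z) = bscale c (mul x z)"
  by (simp add: mul_eq bscale_def lm_cscale_right rm_cscale_right mult_cscale_right cscale_add_right)

lemma mul_one_left [simp]: "mul (1, 0) z = z"
  and mul_one_right [simp]: "mul z (1, 0) = z"
  by (simp_all add: mul_eq)

lemma fst_bpow: "fst (bpow lm rm x n) = fst x ^ n"
  by (induction n) (simp_all add: bpow_def mul_eq)

definition lreg :: "'a \<times> 'f \<Rightarrow> ('a, 'f) lin_endo" where
  "lreg x = Abs_lin_endo (mul x)"

lemma Rep_lreg: "Rep_lin_endo (lreg x) = mul x"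
  by (simp add: lreg_def Abs_lin_endo_inverse lin_end_def mul_badd_right mul_bscale_right)

lemma lreg_mult: "lreg x * lreg y = lreg (mul x y)"
  by (rule lin_endo_eqI) (simp add: times_lin_endo.rep_eq Rep_lreg mul_assoc)

lemma lreg_badd: "lreg (badd x y) = lreg x + lreg y"
  by (rule lin_endo_eqI) (simp add: plus_lin_endo.rep_eq Rep_lreg mul_badd_left)

lemma lreg_bscale: "lreg (bscale c x) = cscale c (lreg x)"
  by (rule lin_endo_eqI) (simp add: cscale_lin_endo.rep_eq Rep_lreg mul_bscale_left)

lemma lreg_one: "lreg (1, 0) = 1"
  by (rule lin_endo_eqI) (simp add: one_lin_endo.rep_eq Rep_lreg)

lemma lreg_zero: "lreg (0, 0) = 0"
  by (rule lin_endo_eqI) (simp add: zero_lin_endo.rep_eq Rep_lreg mul_eq)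

lemma lreg_power: "lreg x ^ n = lreg (bpow lm rm x n)"
  by (induction n) (simp_all add: bpow_def lreg_one lreg_mult)

lemma lreg_add_pairs: "lreg (a, f) + lreg (a', f') = lreg (a + a', f + f')"
  using lreg_badd[of "(a, f)" "(a', f')"] by (simp add: badd_def)

lemma lreg_cscale_pair: "cscale c (lreg (a, f)) = lreg (cscale c a, cscale c f)"
  using lreg_bscale[of c "(a, f)"] by (simp add: bscale_def)

definition word_val :: "('a \<times> bool + 'f) list \<Rightarrow> 'a \<times> 'f" where
  "word_val w = foldr (\<lambda>l. mul (letter_val l)) w (1, 0)"

lemma word_val_Nil [simp]: "word_val [] = (1, 0)"
  by (simp add: word_val_def)

lemma word_val_Cons: "word_val (l # w) = mul (letter_val l) (word_val w)"
  by (simp add: word_val_def)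

lemma word_val_append: "word_val (v @ w) = mul (word_val v) (word_val w)"
  by (induction v) (simp_all add: word_val_Cons mul_assoc)

lemma word_val_concat: "word_val (concat ws) = bprod_list lm rm (map word_val ws)"
  by (induction ws) (simp_all add: bprod_list_def word_val_append)

lemma prod_list_lreg_letters: "prod_list (map (\<lambda>l. lreg (letter_val l)) w) = lreg (word_val w)"
  by (induction w) (simp_all add: lreg_one lreg_mult word_val_Cons)

lemma word_val_normal_form:
  "word_val w = (if snd (normal_form w) = [] then (fst (normal_form w), 0)
     else (0, lm (fst (normal_form w)) (lprod (map (\<lambda>(g, c). rm g c) (snd (normal_form w))))))"
proof (induction w rule: normal_form.induct)
  case 1
  then show ?case by simp
next
  case (2 c i w)
  then show ?case by (auto simp: word_val_Cons mul_eq lm_mult)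
next
  case (3 g w)
  then show ?case by (auto simp: word_val_Cons mul_eq rm_times_eq_times_lm[symmetric] lprod_Cons)
qed

lemma word_val_replicate: "word_val (replicate n (Inr f)) = bpow lm rm (0, f) n"
  by (induction n) (simp_all add: word_val_Cons bpow_def)

lemma bpow_in_balg_gen: "0 < n \<Longrightarrow> bpow lm rm x n \<in> balg_gen lm rm {x}"
proof (induction n)
  case (Suc n)
  then show ?case
    by (cases n) (auto simp: bpow_def intro: balg_gen.base balg_gen.mult)
qed simp

end

lemma alternating_Nil [simp]: "alternating []"
  and alternating_single [simp]: "alternating [x]"
  by (simp_all add: alternating_def)

lemma alternating_Cons_Cons: "alternating (x # y # ys) \<longleftrightarrow> x \<noteq> y \<and> alternating (y # ys)"
  by (auto simp: alternating_def nth_Cons split: nat.splits)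

definition head_index :: "('a \<times> bool + 'f) list \<Rightarrow> bool option" where
  "head_index w = (case w of Inl (c, i) # _ \<Rightarrow> Some i | _ \<Rightarrow> None)"

lemma head_index_simps [simp]:
  "head_index [] = None" "head_index (Inl (c, i) # w) = Some i" "head_index (Inr g # w) = None"
  by (simp_all add: head_index_def)

lemma head_index_append: "v \<noteq> [] \<Longrightarrow> head_index (v @ w) = head_index v"
  by (cases v) (auto simp: head_index_def split: sum.splits prod.splits)

fun admissible :: "('a::calg_1 \<Rightarrow> complex) \<Rightarrow> (bool \<Rightarrow> 'a) \<Rightarrow> 'f set \<Rightarrow> ('a \<times> bool + 'f) list \<Rightarrow> bool" where
  "admissible \<phi> a G [] \<longleftrightarrow> True"
| "admissible \<phi> a G (Inl (c, i) # w) \<longleftrightarrow>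
    c \<in> ualg_gen {a i} \<and> \<phi> c = 0 \<and> head_index w \<noteq> Some i \<and> admissible \<phi> a G w"
| "admissible \<phi> a G (Inr g # w) \<longleftrightarrow> g \<in> G \<and> admissible \<phi> a G w"

lemma admissible_append:
  assumes "admissible \<phi> a G v" "admissible \<phi> a G w"
    and "\<And>c i. v \<noteq> [] \<Longrightarrow> last v = Inl (c, i) \<Longrightarrow> head_index w \<noteq> Some i"
  shows "admissible \<phi> a G (v @ w)"
  using assms
proof (induction \<phi> a G v rule: admissible.induct)
  case (2 \<phi> a G c i v)
  then show ?case by (cases "v = []") (auto simp: head_index_append)
qed auto

locale ncps_B'_pair = bimodule_algebra lm rm for lm :: "'a::calg_1 \<Rightarrow> 'f::calg \<Rightarrow> 'f" and rm +
  fixes \<phi> :: "'a \<Rightarrow> complex" and \<Phi> :: "'f \<Rightarrow> complex" and a1 a2 :: 'a and f1 f2 P :: 'f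
  assumes state: "cstate \<phi>" and Phi_linear: "clinear \<Phi>" and Phi_P: "\<Phi> P \<noteq> 0"
    and free: "free2 \<phi> (ualg_gen {a1}) (ualg_gen {a2})"
    and cam: "cam_indep \<phi> \<Phi> lm rm (ualg_gen {a1, a2}) (alg_gen {P, f1, f2})"
    and bool: "bool_indepB lm rm (phiP \<Phi> lm rm P) (balg_gen lm rm {(0, f1)}) (balg_gen lm rm {(0, f2)})"
begin

abbreviation "A0 \<equiv> ualg_gen {a1, a2}"
abbreviation "F0 \<equiv> alg_gen {P, f1, f2}"
abbreviation "\<psi> \<equiv> phiP \<Phi> lm rm P"

definition agen :: "bool \<Rightarrow> 'a" where "agen i = (if i then a1 else a2)"
definition fgen :: "bool \<Rightarrow> 'f" where "fgen i = (if i then f1 else f2)"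

lemma phi_linear: "clinear \<phi>" and phi_one: "\<phi> 1 = 1"
  using state by (simp_all add: cstate_def)

lemma ualg_gen_agen_subset: "c \<in> ualg_gen {agen i} \<Longrightarrow> c \<in> A0"
  by (erule ualg_gen_mono) (auto simp: agen_def)

lemma alg_gen_fgen_subset: "g \<in> alg_gen {fgen i} \<Longrightarrow> g \<in> F0"
  by (erule alg_gen_mono) (auto simp: fgen_def)

lemma generators_F0: "{f1, f2} \<subseteq> F0"
  by (auto intro: alg_gen.base)

lemma normal_form_mem:
  assumes "\<And>c i. Inl (c, i) \<in> set w \<Longrightarrow> c \<in> A0" "\<And>g. Inr g \<in> set w \<Longrightarrow> g \<in> F0"
  shows "fst (normal_form w) \<in> A0 \<and> (\<forall>(g, c)\<in>set (snd (normal_form w)). g \<in> F0 \<and> c \<in> A0)"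
  using assms by (induction w rule: normal_form.induct) (auto intro: ualg_gen.one ualg_gen.mult)

lemma Phi_P_word:
  assumes "c0 \<in> A0" "\<forall>(g, c)\<in>set gcs. g \<in> F0 \<and> c \<in> A0"
  shows "\<Phi> (lprod (map (\<lambda>(g, c). rm g c) ((P, c0) # gcs)))
    = \<phi> c0 * prod_list (map (\<lambda>(g, c). \<phi> c) gcs) * \<Phi> (lprod (P # map fst gcs))"
proof -
  let ?gcs = "(P, c0) # gcs"
  have "\<Phi> (lm 1 (lprod (map (\<lambda>(g, c). rm g c) ?gcs)))
      = \<phi> (1 * snd (last ?gcs)) * prod_list (map (\<lambda>(g, c). \<phi> c) (butlast ?gcs)) * \<Phi> (lprod (map fst ?gcs))"
    using assms alg_gen.base[of P "{P, f1, f2}"] ualg_gen.one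
    by (intro cam[unfolded cam_indep_def, rule_format]) auto
  moreover have "prod_list (map (\<lambda>(g, c). \<phi> c) ?gcs)
      = prod_list (map (\<lambda>(g, c). \<phi> c) (butlast ?gcs)) * \<phi> (snd (last ?gcs))"
    by (subst append_butlast_last_id[symmetric, of ?gcs]) (simp_all add: case_prod_beta)
  ultimately show ?thesis by (simp add: mult.commute mult.left_commute)
qed

lemma snd_mul_P: "snd (mul (0, P) x) = rm P (fst x) + P * snd x"
  by (simp add: mul_eq)

lemma phiP_word_val:
  assumes "\<And>c i. Inl (c, i) \<in> set w \<Longrightarrow> c \<in> A0" "\<And>g. Inr g \<in> set w \<Longrightarrow> g \<in> F0"
  shows "\<psi> (word_val w) = \<phi> (fst (normal_form w)) * prod_list (map (\<lambda>(g, c). \<phi> c) (snd (normal_form w)))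
    * \<Phi> (lprod (P # map fst (snd (normal_form w)))) / \<Phi> P"
proof -
  obtain c0 gcs where nf: "normal_form w = (c0, gcs)" by fastforce
  then have mem: "c0 \<in> A0" "\<forall>(g, c)\<in>set gcs. g \<in> F0 \<and> c \<in> A0"
    using normal_form_mem[where w = w, OF assms] by auto
  show ?thesis
  proof (cases "gcs = []")
    case True
    then have "word_val w = (c0, 0)" using word_val_normal_form[of w] nf by simp
    then show ?thesis using Phi_P_word[OF mem] True nf by (simp add: phiP_def snd_mul_P)
  next
    case False
    then have "word_val w = (0, lm c0 (lprod (map (\<lambda>(g, c). rm g c) gcs)))"
      using word_val_normal_form[of w] nf by simp
    moreover have "P * lm c0 (lprod (map (\<lambda>(g, c). rm g c) gcs)) = lprod (map (\<lambda>(g, c). rm g c) ((P, c0) # gcs))"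
      using False by (simp add: rm_times_eq_times_lm[symmetric] lprod_Cons)
    ultimately show ?thesis using Phi_P_word[OF mem] nf by (simp add: phiP_def snd_mul_P)
  qed
qed

definition alternating_centered :: "bool \<Rightarrow> 'a set" where
  "alternating_centered i = {prod_list (map fst cs) | cs. cs \<noteq> [] \<and> alternating (map snd cs)
     \<and> snd (hd cs) = i \<and> (\<forall>(c, j)\<in>set cs. c \<in> ualg_gen {agen j} \<and> \<phi> c = 0)}"

lemma phi_alternating_centered: "c \<in> alternating_centered i \<Longrightarrow> \<phi> c = 0"
proof -
  assume "c \<in> alternating_centered i"
  then obtain cs where cs: "c = prod_list (map fst cs)" "cs \<noteq> []" "alternating (map snd cs)"
    "\<forall>(c, j)\<in>set cs. c \<in> ualg_gen {agen j} \<and> \<phi> c = 0"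
    by (auto simp: alternating_centered_def)
  have "map fst cs ! k \<in> (if map snd cs ! k then ualg_gen {a1} else ualg_gen {a2}) \<and> \<phi> (map fst cs ! k) = 0"
    if "k < length (map fst cs)" for k
  proof -
    obtain c' j where "cs ! k = (c', j)" by fastforce
    then show ?thesis using that cs(4) nth_mem[of k cs] by (cases j) (auto simp: agen_def)
  qed
  then show ?thesis
    using free[unfolded free2_def, rule_format, of "map fst cs" "map snd cs"] cs(1-3) by simp
qed

lemma normal_form_admissible:
  assumes "admissible \<phi> agen G w"
  shows "(\<forall>i. head_index w = Some i \<longrightarrow> fst (normal_form w) \<in> alternating_centered i)
    \<and> (head_index w = None \<longrightarrow> fst (normal_form w) = 1)
    \<and> ((\<exists>c i. Inl (c, i) \<in> set w) \<longrightarrow>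
         \<phi> (fst (normal_form w)) = 0 \<or> (\<exists>(g, c)\<in>set (snd (normal_form w)). \<phi> c = 0))"
  using assms
proof (induction w rule: normal_form.induct)
  case 1
  then show ?case by simp
next
  case (2 c i w)
  then have IH: "(\<forall>j. head_index w = Some j \<longrightarrow> fst (normal_form w) \<in> alternating_centered j)
      \<and> (head_index w = None \<longrightarrow> fst (normal_form w) = 1)" and c: "c \<in> ualg_gen {agen i}" "\<phi> c = 0"
    and head: "head_index w \<noteq> Some i"
    by auto
  have "c * fst (normal_form w) \<in> alternating_centered i"
  proof (cases "head_index w")
    case None
    then show ?thesis using IH c unfolding alternating_centered_def
      by (intro CollectI exI[of _ "[(c, i)]"]) simp
  next
    case (Some j)
    then obtain cs where cs: "fst (normal_form w) = prod_list (map fst cs)" "cs \<noteq> []"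
      "alternating (map snd cs)" "snd (hd cs) = j" "\<forall>(c, j)\<in>set cs. c \<in> ualg_gen {agen j} \<and> \<phi> c = 0"
      using IH by (auto simp: alternating_centered_def)
    moreover have "alternating (map snd ((c, i) # cs))"
      using cs(2-4) head Some by (cases cs) (auto simp: alternating_Cons_Cons)
    ultimately show ?thesis using c unfolding alternating_centered_def
      by (intro CollectI exI[of _ "(c, i) # cs"]) auto
  qed
  then show ?case using phi_alternating_centered by auto
next
  case (3 g w)
  then show ?case by auto
qed

lemma phiP_admissible_with_A_letter:
  assumes "admissible \<phi> agen G w" "G \<subseteq> F0" "Inl (c, i) \<in> set w"
  shows "\<psi> (word_val w) = 0"
proof -
  have mem: "c \<in> A0" if "Inl (c, i) \<in> set w" for c i
    using assms(1) that by (induction \<phi> agen G w rule: admissible.induct) (auto intro: ualg_gen_agen_subset)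
  have "g \<in> F0" if "Inr g \<in> set w" for g
    using assms(1,2) that by (induction \<phi> agen G w rule: admissible.induct) auto
  moreover have "\<phi> (fst (normal_form w)) = 0 \<or> (\<exists>(g, c)\<in>set (snd (normal_form w)). \<phi> c = 0)"
    using normal_form_admissible[OF assms(1)] assms(3) by blast
  then have "\<phi> (fst (normal_form w)) * prod_list (map (\<lambda>(g, c). \<phi> c) (snd (normal_form w))) = 0"
    by (auto simp: prod_list_zero_iff intro: rev_image_eqI)
  ultimately show ?thesis by (simp add: phiP_word_val[OF mem])
qed

definition psi_reg :: "('a, 'f) lin_endo \<Rightarrow> complex" where
  "psi_reg T = \<psi> (Rep_lin_endo T (1, 0))"

definition phi_reg :: "('a, 'f) lin_endo \<Rightarrow> complex" where
  "phi_reg T = \<phi> (fst (Rep_lin_endo T (1, 0)))"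

lemma psi_reg_lreg: "psi_reg (lreg x) = \<psi> x"
  by (simp add: psi_reg_def Rep_lreg)

lemma phi_reg_lreg: "phi_reg (lreg x) = \<phi> (fst x)"
  by (simp add: phi_reg_def Rep_lreg mul_eq)

lemma phiP_badd: "\<psi> (badd x y) = \<psi> x + \<psi> y"
  using Phi_linear
  by (simp add: phiP_def snd_mul_P badd_def rm_add_right clinear_add algebra_simps add_divide_distrib)

lemma phiP_bscale: "\<psi> (bscale c x) = c * \<psi> x"
  using Phi_linear
  by (simp add: phiP_def snd_mul_P bscale_def rm_cscale_right mult_cscale_right
      cscale_add_right[symmetric] clinear_scale)

lemma phiP_one: "\<psi> (1, 0) = 1"
  using Phi_P by (simp add: phiP_def snd_mul_P)

lemma clinear_psi_reg: "clinear psi_reg"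
  by (simp add: clinear_def psi_reg_def plus_lin_endo.rep_eq cscale_lin_endo.rep_eq phiP_badd phiP_bscale)

lemma cstate_psi_reg: "cstate psi_reg"
  by (simp add: cstate_def clinear_def psi_reg_def plus_lin_endo.rep_eq cscale_lin_endo.rep_eq
      one_lin_endo.rep_eq phiP_badd phiP_bscale phiP_one)

lemma clinear_phi_reg: "clinear phi_reg"
  using phi_linear
  by (simp add: clinear_def phi_reg_def plus_lin_endo.rep_eq cscale_lin_endo.rep_eq badd_def bscale_def)

end


section \<open>Conditional freeness in the regular representation\<close>

context ncps_B'_pair
begin

text \<open>\<open>\<phi>\<close>-centred polynomials in \<open>b\<^sub>i\<close> are linear combinations of segments of index \<open>i\<close>.\<close>
definition segment :: "bool \<Rightarrow> ('a \<times> bool + 'f) list \<Rightarrow> bool" where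
  "segment i s \<longleftrightarrow> s \<noteq> [] \<and> admissible \<phi> agen {f1, f2} s \<and>
     (\<forall>c j. Inl (c, j) \<in> set s \<longrightarrow> j = i) \<and> (\<forall>g. Inr g \<in> set s \<longrightarrow> g = fgen i)"

lemma head_index_segment: "segment i s \<Longrightarrow> head_index s = Some j \<Longrightarrow> j = i"
  by (cases s) (auto simp: segment_def head_index_def split: sum.splits prod.splits)

lemma admissible_concat_segments:
  assumes "alternating idx" "list_all2 segment idx ss"
  shows "admissible \<phi> agen {f1, f2} (concat ss)"
  using assms(2,1)
proof (induction idx ss rule: list_all2_induct)
  case (Cons i idx s ss)
  have "head_index (concat ss) \<noteq> Some i"
  proof (cases ss)
    case (Cons s' ss')
    with \<open>list_all2 segment idx ss\<close> obtain i' idx' where "idx = i' # idx'" "segment i' s'"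
      by (cases idx) auto
    then show ?thesis
      using Cons Cons.prems head_index_segment[of i' s'] head_index_append[of s']
      by (auto simp: alternating_Cons_Cons segment_def)
  qed simp
  moreover have "alternating idx"
    using Cons.prems by (cases idx) (simp_all add: alternating_Cons_Cons)
  ultimately show ?case
  proof (simp only: concat.simps, intro admissible_append)
    show "admissible \<phi> agen {f1, f2} s" using Cons.hyps(1) by (simp add: segment_def)
    show "admissible \<phi> agen {f1, f2} (concat ss)" if "alternating idx" using Cons.IH that .
    fix c k assume "s \<noteq> []" "last s = Inl (c, k)"
    then have "k = i" using Cons.hyps(1) last_in_set unfolding segment_def by metis
    then show "head_index (concat ss) \<noteq> Some k" if "head_index (concat ss) \<noteq> Some i" using that by simp
  qed
qed simp

lemma word_val_segment_without_A_letters: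
  assumes "segment i s" "\<forall>c j. Inl (c, j) \<notin> set s"
  shows "word_val s \<in> balg_gen lm rm {(0, fgen i)}"
proof -
  have "y = Inr (fgen i)" if "y \<in> set s" for y
    using assms that by (cases y) (auto simp: segment_def)
  then have "replicate (length s) (Inr (fgen i)) = s"
    by (intro replicate_length_same) blast
  then show ?thesis
    using assms(1) word_val_replicate bpow_in_balg_gen by (metis length_greater_0_conv segment_def)
qed

text \<open>Concatenated segments alternating in index: \<open>\<psi>\<close> vanishes on both sides as soon as an
  \<open>\<A>\<close>-letter occurs, and otherwise factorises by Boolean independence.\<close>
lemma phiP_concat_segments:
  assumes alt: "alternating idx" and segs: "list_all2 segment idx ss"
  shows "\<psi> (word_val (concat ss)) = prod_list (map (\<lambda>s. \<psi> (word_val s)) ss)"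
proof (cases "\<exists>s\<in>set ss. \<exists>c j. Inl (c, j) \<in> set s")
  case True
  then obtain s c j where s: "s \<in> set ss" "Inl (c, j) \<in> set s" by blast
  obtain i where "segment i s"
    using s(1) segs by (metis in_set_conv_nth list_all2_conv_all_nth)
  then have "\<psi> (word_val s) = 0"
    using phiP_admissible_with_A_letter[OF _ generators_F0 s(2)] by (simp add: segment_def)
  moreover have "\<psi> (word_val (concat ss)) = 0"
    using phiP_admissible_with_A_letter[OF admissible_concat_segments[OF alt segs] generators_F0] s
    by auto
  ultimately show ?thesis using s(1) by (simp add: prod_list_zero_iff)
next
  case False
  show ?thesis
  proof (cases "ss = []")
    case True
    then show ?thesis by (simp add: phiP_one)
  next
    case nonempty: False
    have "map word_val ss ! k \<in> (if idx ! k then balg_gen lm rm {(0, f1)} else balg_gen lm rm {(0, f2)})"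
      if "k < length (map word_val ss)" for k
      using that segs False word_val_segment_without_A_letters[of "idx ! k" "ss ! k"]
      by (auto simp: list_all2_conv_all_nth fgen_def)
    then have "\<psi> (bprod_list lm rm (map word_val ss)) = prod_list (map \<psi> (map word_val ss))"
      using bool[unfolded bool_indepB_def, rule_format, of "map word_val ss" idx] nonempty alt segs
      by (simp add: list_all2_lengthD)
    then show ?thesis by (simp add: word_val_concat comp_def)
  qed
qed

definition breg :: "bool \<Rightarrow> ('a, 'f) lin_endo" where
  "breg i = lreg (agen i, fgen i)"

definition segment_ops :: "bool \<Rightarrow> ('a, 'f) lin_endo set" where
  "segment_ops i = {lreg (word_val s) | s. segment i s}"

abbreviation segment_span :: "bool \<Rightarrow> ('a, 'f) lin_endo set" where
  "segment_span i \<equiv> cspan (insert 1 (segment_ops i))"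

lemma lreg_word_val_segment_span:
  assumes "s = [] \<or> segment i s"
  shows "lreg (word_val s) \<in> segment_span i"
proof (rule cspan.base)
  show "lreg (word_val s) \<in> insert 1 (segment_ops i)"
    using assms by (auto simp: segment_ops_def lreg_one)
qed

lemma segment_span_mult_closed:
  assumes "T \<in> segment_span i"
    and "\<And>s. s = [] \<or> segment i s \<Longrightarrow> M * lreg (word_val s) \<in> segment_span i"
  shows "M * T \<in> segment_span i"
  using assms(1)
proof (induction rule: cspan.induct)
  case (base T)
  then consider "T = lreg (word_val [])" | s where "segment i s" "T = lreg (word_val s)"
    by (auto simp: segment_ops_def lreg_one)
  then show ?case
  proof cases
    case 1
    then show ?thesis using assms(2)[of "[]"] by simp
  next
    case (2 s)
    then show ?thesis using assms(2)[of s] by simp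
  qed
next
  case zero
  then show ?case by (simp add: cspan.zero)
next
  case (add x y)
  then show ?case by (simp add: distrib_left cspan.add)
next
  case (scale x c)
  then show ?case by (simp add: mult_cscale_right cspan.scale)
qed

lemma lreg_A_Cons_segment_span:
  assumes c: "c \<in> ualg_gen {agen i}" and s: "s = [] \<or> segment i s" "head_index s \<noteq> Some i"
  shows "lreg (c, 0) * lreg (word_val s) \<in> segment_span i"
proof -
  let ?c = "c - cscale (\<phi> c) 1"
  have "?c \<in> ualg_gen {agen i}"
    using c by (intro ualg_gen_diff ualg_gen.scale ualg_gen.one)
  moreover have "\<phi> ?c = 0"
    using phi_linear phi_one by (simp add: clinear_diff clinear_scale)
  ultimately have "segment i (Inl (?c, i) # s)"
    using s by (auto simp: segment_def)
  moreover have "lreg (c, 0) = lreg (?c, 0) + cscale (\<phi> c) 1"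
    by (simp add: lreg_add_pairs lreg_cscale_pair lreg_one[symmetric])
  then have "lreg (c, 0) * lreg (word_val s) = lreg (word_val (Inl (?c, i) # s)) + cscale (\<phi> c) (lreg (word_val s))"
    by (simp add: distrib_right mult_cscale_left word_val_Cons lreg_mult)
  ultimately show ?thesis
    using s lreg_word_val_segment_span by (simp add: cspan.add cspan.scale)
qed

lemma lreg_A_mult_segment_span:
  assumes c: "c \<in> ualg_gen {agen i}" and T: "T \<in> segment_span i"
  shows "lreg (c, 0) * T \<in> segment_span i"
  using T
proof (rule segment_span_mult_closed)
  fix s assume s: "s = [] \<or> segment i s"
  show "lreg (c, 0) * lreg (word_val s) \<in> segment_span i"
  proof (cases "head_index s = Some i")
    case True
    then obtain c' s' where s': "s = Inl (c', i) # s'"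
      by (cases s) (auto simp: head_index_def split: sum.splits prod.splits)
    then have c': "c' \<in> ualg_gen {agen i}" and "head_index s' \<noteq> Some i" "s' = [] \<or> segment i s'"
      using s by (auto simp: segment_def)
    moreover have "lreg (c, 0) * lreg (word_val s) = lreg (c * c', 0) * lreg (word_val s')"
      by (simp add: s' word_val_Cons lreg_mult mul_eq lm_mult mult.assoc)
    ultimately show ?thesis
      using lreg_A_Cons_segment_span ualg_gen.mult[OF c c'] by simp
  qed (use lreg_A_Cons_segment_span c s in simp)
qed

lemma lreg_F_mult_segment_span:
  assumes "T \<in> segment_span i"
  shows "lreg (0, fgen i) * T \<in> segment_span i"
  using assms
proof (rule segment_span_mult_closed)
  fix s assume "s = [] \<or> segment i s"
  then have "segment i (Inr (fgen i) # s)"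
    by (cases i) (auto simp: segment_def fgen_def)
  then show "lreg (0, fgen i) * lreg (word_val s) \<in> segment_span i"
    using lreg_word_val_segment_span by (fastforce simp: word_val_Cons lreg_mult)
qed

lemma peval_breg_segment_span: "peval p (breg i) \<in> segment_span i"
proof -
  have "breg i = lreg (agen i, 0) + lreg (0, fgen i)"
    by (simp add: breg_def lreg_add_pairs)
  then have "breg i * T \<in> segment_span i" if "T \<in> segment_span i" for T
    using lreg_A_mult_segment_span[OF _ that, of "agen i"] lreg_F_mult_segment_span[OF that]
    by (simp add: distrib_right cspan.add ualg_gen.base)
  then have "breg i ^ k \<in> segment_span i" for k
    by (induction k) (simp_all add: cspan.base)
  then show ?thesis unfolding peval_def by (intro cspan_sum cspan.scale)
qed

lemma phi_reg_segment: "segment i s \<Longrightarrow> phi_reg (lreg (word_val s)) = 0"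
proof -
  assume s: "segment i s"
  show ?thesis
  proof (cases "snd (normal_form s) = []")
    case True
    obtain c j s' where "s = Inl (c, j) # s'"
      using True s by (cases s rule: normal_form.cases) (auto simp: segment_def)
    then have "fst (normal_form s) \<in> alternating_centered j"
      using normal_form_admissible[of "{f1, f2}" s] s by (simp add: segment_def)
    then show ?thesis
      using True phi_alternating_centered by (simp add: phi_reg_lreg word_val_normal_form)
  qed (simp add: phi_reg_lreg word_val_normal_form clinear_zero[OF phi_linear])
qed

lemma segment_span_centered:
  "T \<in> segment_span i \<Longrightarrow> T - cscale (phi_reg T) 1 \<in> cspan (segment_ops i)"
proof (induction rule: cspan.induct)
  case zero
  then show ?case by (simp add: clinear_zero[OF clinear_phi_reg] cspan.zero)
next
  case (base T)
  then consider "T = 1" | "T \<in> segment_ops i" by blast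
  then show ?case
  proof cases
    case 1
    then show ?thesis by (simp add: phi_reg_def one_lin_endo.rep_eq phi_one cscale_one cspan.zero)
  next
    case 2
    then have "phi_reg T = 0" by (auto simp: segment_ops_def phi_reg_segment)
    then show ?thesis using 2 by (simp add: cspan.base)
  qed
next
  case (add x y)
  have "x + y - cscale (phi_reg (x + y)) 1 = (x - cscale (phi_reg x) 1) + (y - cscale (phi_reg y) 1)"
    by (simp add: clinear_add[OF clinear_phi_reg] cscale_add_left)
  then show ?case using add.IH by (metis cspan.add)
next
  case (scale x c)
  have "cscale c x - cscale (phi_reg (cscale c x)) 1 = cscale c (x - cscale (phi_reg x) 1)"
    by (simp add: clinear_scale[OF clinear_phi_reg] cscale_diff_right cscale_cscale)
  then show ?case using scale.IH by (metis cspan.scale)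
qed

lemma prod_list_lreg_word_val: "prod_list (map (\<lambda>s. lreg (word_val s)) ss) = lreg (word_val (concat ss))"
  by (induction ss) (simp_all add: lreg_one lreg_mult word_val_append)

lemma psi_reg_prod_segment_ops:
  assumes "alternating idx" "list_all2 (\<lambda>T i. T \<in> segment_ops i) Ts idx"
  shows "psi_reg (prod_list Ts) = prod_list (map psi_reg Ts)"
proof -
  obtain ss where ss: "list_all2 segment idx ss" "Ts = map (\<lambda>s. lreg (word_val s)) ss"
    using assms(2)
  proof (induction Ts idx arbitrary: thesis rule: list_all2_induct)
    case (Cons T Ts i idx)
    obtain s where "segment i s" "T = lreg (word_val s)" using Cons.hyps(1) by (auto simp: segment_ops_def)
    moreover obtain ss where "list_all2 segment idx ss" "Ts = map (\<lambda>s. lreg (word_val s)) ss"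
      using Cons.IH by blast
    ultimately show ?case using Cons.prems[of "s # ss"] by simp
  qed simp
  then show ?thesis
    using phiP_concat_segments[OF assms(1) ss(1)]
    by (simp add: prod_list_lreg_word_val psi_reg_lreg comp_def)
qed

lemma psi_reg_cfree:
  assumes alt: "alternating (map fst zs)" and centered: "\<forall>(i, p)\<in>set zs. phi_reg (peval p (breg i)) = 0"
  shows "psi_reg (poly_word breg zs) = prod_list (map (\<lambda>(i, p). psi_reg (peval p (breg i))) zs)"
proof -
  let ?Ts = "map (\<lambda>(i, p). peval p (breg i)) zs"
  have "list_all2 (\<lambda>T S. T \<in> cspan S) ?Ts (map segment_ops (map fst zs))"
  proof (simp add: list.rel_map, rule list.rel_refl_strong)
    fix z assume "z \<in> set zs"
    moreover obtain i p where z: "z = (i, p)" by fastforce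
    ultimately have "phi_reg (peval p (breg i)) = 0" using centered by auto
    then show "(case z of (i, p) \<Rightarrow> peval p (breg i)) \<in> cspan (segment_ops (fst z))"
      using segment_span_centered[OF peval_breg_segment_span, of p i] z by simp
  qed
  moreover have "psi_reg (prod_list ([] @ Us)) = prod_list (map psi_reg ([] @ Us))"
    if "list_all2 (\<in>) Us (map segment_ops (map fst zs))" for Us
  proof -
    have "list_all2 (\<lambda>T i. T \<in> segment_ops i) Us (map fst zs)"
      using that by (simp add: list_all2_map2)
    then show ?thesis using psi_reg_prod_segment_ops[OF alt] by simp
  qed
  ultimately have "psi_reg (prod_list ([] @ ?Ts)) = prod_list (map psi_reg ([] @ ?Ts))"
    by (rule prod_list_factorization_cspan[OF clinear_psi_reg])
  moreover have "map psi_reg ?Ts = map (\<lambda>(i, p). psi_reg (peval p (breg i))) zs"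
    by (simp add: case_prod_beta)
  ultimately show ?thesis unfolding poly_word_def by (simp only: append.simps(1))
qed

section \<open>Monotone independence in the regular representation\<close>

lemma alg_gen_lreg_F: "x \<in> alg_gen {lreg (0, h)} \<Longrightarrow> \<exists>g. x = lreg (0, g) \<and> g \<in> alg_gen {h}"
proof (induction rule: alg_gen.induct)
  case zero
  then show ?case using lreg_zero alg_gen.zero by metis
next
  case (base s)
  then show ?case using alg_gen.base by blast
next
  case (add x y)
  then show ?case using lreg_add_pairs[of 0 _ 0] alg_gen.add by fastforce
next
  case (scale x c)
  then show ?case using lreg_cscale_pair[of c 0] alg_gen.scale by fastforce
next
  case (mult x y)
  then show ?case using alg_gen.mult by (fastforce simp: lreg_mult mul_eq)
qed

lemma ualg_gen_lreg_A: "x \<in> ualg_gen {lreg (c, 0)} \<Longrightarrow> \<exists>d. x = lreg (d, 0) \<and> d \<in> ualg_gen {c}"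
proof (induction rule: ualg_gen.induct)
  case one
  then show ?case using lreg_one ualg_gen.one by metis
next
  case (base s)
  then show ?case using ualg_gen.base by blast
next
  case (add x y)
  then show ?case using lreg_add_pairs[of _ 0 _ 0] ualg_gen.add by fastforce
next
  case (scale x e)
  then show ?case using lreg_cscale_pair[of e _ 0] ualg_gen.scale by fastforce
next
  case (mult x y)
  then show ?case using ualg_gen.mult by (fastforce simp: lreg_mult mul_eq)
qed

lemma normal_form_alternating:
  "normal_form (concat (map (\<lambda>(g, c). [Inr g, Inl (c, i)]) gcs)) = (1, gcs)"
  by (induction gcs) auto

lemma psi_reg_alternating:
  assumes "c0 \<in> A0" "\<forall>(g, c)\<in>set gcs. g \<in> F0 \<and> c \<in> A0"
  shows "psi_reg (lreg (c0, 0) * prod_list (map (\<lambda>(g, c). lreg (0, g) * lreg (c, 0)) gcs))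
    = \<phi> c0 * prod_list (map (\<lambda>(g, c). \<phi> c) gcs) * \<Phi> (lprod (P # map fst gcs)) / \<Phi> P"
proof -
  let ?w = "Inl (c0, True) # concat (map (\<lambda>(g, c). [Inr g, Inl (c, True)]) gcs)"
  have "lreg (c0, 0) * prod_list (map (\<lambda>(g, c). lreg (0, g) * lreg (c, 0)) gcs) = lreg (word_val ?w)"
    by (simp add: prod_list_lreg_letters[symmetric] prod_list_map_concat comp_def case_prod_unfold)
  moreover have "\<psi> (word_val ?w)
      = \<phi> c0 * prod_list (map (\<lambda>(g, c). \<phi> c) gcs) * \<Phi> (lprod (P # map fst gcs)) / \<Phi> P"
    using assms by (subst phiP_word_val) (auto simp: normal_form_alternating)
  ultimately show ?thesis by (simp add: psi_reg_lreg)
qed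

lemma psi_reg_A: "d \<in> A0 \<Longrightarrow> psi_reg (lreg (d, 0)) = \<phi> d"
  using psi_reg_alternating[of d "[]"] Phi_P by simp

lemma psi_reg_F:
  assumes "set gs \<subseteq> F0"
  shows "psi_reg (prod_list (map (\<lambda>g. lreg (0, g)) gs)) = \<Phi> (lprod (P # gs)) / \<Phi> P"
  using psi_reg_alternating[of 1 "map (\<lambda>g. (g, 1)) gs"] assms
  by (simp add: ualg_gen.one lreg_one phi_one comp_def subset_iff map_replicate_const)

lemma lreg_pairs_representation:
  assumes "\<forall>(x, z)\<in>set xzs. x \<in> alg_gen {lreg (0, fgen i)} \<and> z \<in> ualg_gen {lreg (agen i, 0)}"
  obtains gcs where "xzs = map (\<lambda>(g, c). (lreg (0, g), lreg (c, 0))) gcs"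
    and "\<forall>(g, c)\<in>set gcs. g \<in> F0 \<and> c \<in> A0"
proof -
  let ?R = "\<lambda>(x, z) (g, c). x = lreg (0, g) \<and> z = lreg (c, 0) \<and> g \<in> F0 \<and> c \<in> A0"
  have "\<exists>gc. ?R xz gc" if "xz \<in> set xzs" for xz
  proof -
    obtain x z where xz: "xz = (x, z)" by fastforce
    then have x: "x \<in> alg_gen {lreg (0, fgen i)}" and z: "z \<in> ualg_gen {lreg (agen i, 0)}"
      using assms that by auto
    obtain g where "x = lreg (0, g)" "g \<in> alg_gen {fgen i}"
      using alg_gen_lreg_F[OF x] by blast
    moreover obtain c where "z = lreg (c, 0)" "c \<in> ualg_gen {agen i}"
      using ualg_gen_lreg_A[OF z] by blast
    ultimately show ?thesis
      using xz alg_gen_fgen_subset ualg_gen_agen_subset by (intro exI[of _ "(g, c)"]) simp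
  qed
  then obtain gcs where "list_all2 ?R xzs gcs"
    using list_all2_choice by blast
  note list_all2_pairs_eq_map[where f = "\<lambda>g. lreg (0, g)" and h = "\<lambda>c. lreg (c, 0)"
      and Q = "\<lambda>g c. g \<in> F0 \<and> c \<in> A0", OF this]
  then show ?thesis using that by simp
qed

lemma mono_indep_psi_reg: "mono_indep psi_reg (alg_gen {lreg (0, fgen i)}) (ualg_gen {lreg (agen i, 0)})"
  unfolding mono_indep_def
proof (intro allI impI)
  fix z0 and xzs :: "(('a, 'f) lin_endo \<times> ('a, 'f) lin_endo) list"
  assume H: "xzs \<noteq> [] \<and> z0 \<in> ualg_gen {lreg (agen i, 0)} \<and>
    (\<forall>(x, z)\<in>set xzs. x \<in> alg_gen {lreg (0, fgen i)} \<and> z \<in> ualg_gen {lreg (agen i, 0)})"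
  obtain c0 where c0: "z0 = lreg (c0, 0)" "c0 \<in> ualg_gen {agen i}"
    using H ualg_gen_lreg_A by blast
  have c0_A0: "c0 \<in> A0" using c0(2) by (rule ualg_gen_agen_subset)
  obtain gcs where xzs: "xzs = map (\<lambda>(g, c). (lreg (0, g), lreg (c, 0))) gcs"
    and gcs: "\<forall>(g, c)\<in>set gcs. g \<in> F0 \<and> c \<in> A0"
    using H lreg_pairs_representation by blast
  have "map (\<lambda>(x, z). psi_reg z) xzs = map (\<lambda>(g, c). \<phi> c) gcs"
    using gcs by (auto simp: xzs psi_reg_A)
  moreover have "psi_reg (prod_list (map fst xzs)) = \<Phi> (lprod (P # map fst gcs)) / \<Phi> P"
    using gcs psi_reg_F[of "map fst gcs"] by (auto simp: xzs comp_def case_prod_beta)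
  moreover have "map (\<lambda>(x, z). x * z) xzs = map (\<lambda>(g, c). lreg (0, g) * lreg (c, 0)) gcs"
    by (simp add: xzs comp_def case_prod_beta)
  ultimately show "psi_reg (z0 * prod_list (map (\<lambda>(x, z). x * z) xzs))
     = psi_reg (prod_list (map fst xzs)) * psi_reg z0 * prod_list (map (\<lambda>(x, z). psi_reg z) xzs)"
    using psi_reg_alternating[OF c0_A0 gcs] psi_reg_A[OF c0_A0] by (simp add: c0(1))
qed

lemma lreg_A_power: "lreg (c, 0) ^ r = lreg (c ^ r, 0)"
  by (induction r) (simp_all add: lreg_one lreg_mult mul_eq)

lemma antimono_conv_in_psi_reg:
  assumes "antimono_conv_in TYPE('e::calg_1) (distr \<phi> (agen i)) (distrB \<psi> lm rm (0, fgen i)) \<mu>"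
  shows "\<mu> k = psi_reg (breg i ^ k)"
proof -
  obtain \<omega> :: "'e \<Rightarrow> complex" and z1 z2 where \<omega>: "cstate \<omega>" "mono_indep \<omega> (alg_gen {z2}) (ualg_gen {z1})"
    and distr: "distr \<omega> z1 = distr \<phi> (agen i)" "distr \<omega> z2 = distrB \<psi> lm rm (0, fgen i)"
      "distr \<omega> (z1 + z2) = \<mu>"
    using assms unfolding antimono_conv_in_def by blast
  have "agen i ^ r \<in> A0" for r
    using ualg_gen_agen_subset ualg_gen_power ualg_gen.base by blast
  then have "\<omega> (z1 ^ r) = psi_reg (lreg (agen i, 0) ^ r)" for r
    using fun_cong[OF distr(1), of r] by (simp add: distr_def lreg_A_power psi_reg_A)
  moreover have "\<omega> (z2 ^ r) = psi_reg (lreg (0, fgen i) ^ r)" for r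
    using fun_cong[OF distr(2), of r] by (simp add: distr_def distrB_def lreg_power psi_reg_lreg)
  ultimately have "\<omega> ((z1 + z2) ^ k) = psi_reg ((lreg (agen i, 0) + lreg (0, fgen i)) ^ k)"
    by (intro mono_indep_moments_add_unique[OF \<omega> cstate_psi_reg mono_indep_psi_reg])
  then show ?thesis
    using fun_cong[OF distr(3), of k] by (simp add: distr_def breg_def lreg_add_pairs)
qed

lemma phi_reg_breg_power: "phi_reg (breg i ^ k) = \<phi> (agen i ^ k)"
  by (simp add: breg_def lreg_power phi_reg_lreg fst_bpow)

lemma free_conv_is_phiB:
  "free_conv_is TYPE('c::calg_1) (distr \<phi> a1) (distr \<phi> a2) (distrB (phiB \<phi>) lm rm (badd (a1, f1) (a2, f2)))"
proof -
  have "distrB (phiB \<phi>) lm rm (badd (a1, f1) (a2, f2)) = distr \<phi> (a1 + a2)"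
    by (simp add: fun_eq_iff distrB_def distr_def phiB_def fst_bpow badd_def)
  then show ?thesis using free_conv_is_distr_add[OF state free] by simp
qed

lemma cfree_antimono_conv_is_phiP:
  "cfree_antimono_conv_is TYPE('d::calg_1) TYPE('e::calg_1)
     (distr \<phi> a1) (distrB \<psi> lm rm (0, f1)) (distr \<phi> a2) (distrB \<psi> lm rm (0, f2))
     (distrB \<psi> lm rm (badd (a1, f1) (a2, f2)))"
  unfolding cfree_antimono_conv_is_def
proof (intro allI impI ext)
  fix \<omega> \<psi>' :: "'d \<Rightarrow> complex" and c1 c2 n
  assume H: "cstate \<omega> \<and> cstate \<psi>' \<and> cfree2 \<omega> \<psi>' (ualg_gen {c1}) (ualg_gen {c2}) \<and>
    distr \<omega> c1 = distr \<phi> a1 \<and> distr \<omega> c2 = distr \<phi> a2 \<and>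
    antimono_conv_in TYPE('e) (distr \<phi> a1) (distrB \<psi> lm rm (0, f1)) (distr \<psi>' c1) \<and>
    antimono_conv_in TYPE('e) (distr \<phi> a2) (distrB \<psi> lm rm (0, f2)) (distr \<psi>' c2)"
  let ?c = "\<lambda>i. if i then c1 else c2"
  have states: "cstate \<omega>" "cstate \<psi>'" and cfree: "cfree2 \<omega> \<psi>' (ualg_gen {?c True}) (ualg_gen {?c False})"
    using H by simp_all
  have \<omega>_moments: "\<omega> (?c i ^ k) = phi_reg (breg i ^ k)" for i k
    using H by (cases i) (simp_all add: phi_reg_breg_power agen_def distr_def fun_eq_iff)
  have \<psi>_moments: "\<psi>' (?c i ^ k) = psi_reg (breg i ^ k)" for i k
    using H antimono_conv_in_psi_reg[where 'e = 'e, of i "distr \<psi>' (?c i)" k]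
    by (cases i) (simp_all add: agen_def fgen_def distr_def)
  have "\<psi>' ((?c True + ?c False) ^ n) = psi_reg ((breg True + breg False) ^ n)"
    by (rule cfree2_moments_add_unique[where x = ?c and y = breg, OF states cfree clinear_phi_reg
          cstate_psi_reg psi_reg_cfree \<omega>_moments \<psi>_moments])
  moreover have "breg True + breg False = lreg (badd (a1, f1) (a2, f2))"
    by (simp add: breg_def agen_def fgen_def lreg_add_pairs badd_def)
  ultimately show "distr \<psi>' (c1 + c2) n = distrB \<psi> lm rm (badd (a1, f1) (a2, f2)) n"
    by (simp add: distr_def distrB_def lreg_power psi_reg_lreg)
qed

end

theorem corollary4p4:
  fixes \<phi> :: "'a::calg_1 \<Rightarrow> complex" and \<Phi> :: "'f::calg \<Rightarrow> complex"
    and lm :: "'a \<Rightarrow> 'f \<Rightarrow> 'f" and rm :: "'f \<Rightarrow> 'a \<Rightarrow> 'f"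
    and a1 a2 :: 'a and f1 f2 P :: 'f
  assumes ncps: "ncps_B' \<phi> \<Phi> lm rm"
    and P: "\<Phi> P \<noteq> 0"
    and free: "free2 \<phi> (ualg_gen {a1}) (ualg_gen {a2})"
    and cam: "cam_indep \<phi> \<Phi> lm rm (ualg_gen {a1, a2}) (alg_gen {P, f1, f2})"
    and bool: "bool_indepB lm rm (phiP \<Phi> lm rm P)
                 (balg_gen lm rm {(0, f1)}) (balg_gen lm rm {(0, f2)})"
  shows "free_conv_is TYPE('c::calg_1) (distr \<phi> a1) (distr \<phi> a2)
           (distrB (phiB \<phi>) lm rm (badd (a1, f1) (a2, f2)))
       \<and> cfree_antimono_conv_is TYPE('d::calg_1) TYPE('e::calg_1)
           (distr \<phi> a1) (distrB (phiP \<Phi> lm rm P) lm rm (0, f1))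
           (distr \<phi> a2) (distrB (phiP \<Phi> lm rm P) lm rm (0, f2))
           (distrB (phiP \<Phi> lm rm P) lm rm (badd (a1, f1) (a2, f2)))"
proof -
  interpret ncps_B'_pair lm rm \<phi> \<Phi> a1 a2 f1 f2 P
    using ncps P free cam bool by unfold_locales (simp_all add: ncps_B'_def)
  show ?thesis using free_conv_is_phiB cfree_antimono_conv_is_phiP by blast
qed

end
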